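(* Let $0<m<1$, $\mu>0$, let $f:\mathbb{R}\to\mathbb{R}$ be smooth, and let $u_->u_+=0$. For $s\in\mathbb{R}$ put $g(u)=-s(u-u_-)+f(u)-f(u_-)$. (1) (Necessary condition.) If the equation $u_t+f(u)_x=\mu (u^m)_{xx}$ admits a monotonically decreasing shock profile $u(x,t)=U(x-st)$ connecting $u_-$ and $u_+$, i.e. $U$ is monotonically decreasing, solves $-sU_\xi+f(U)_\xi=\mu (U^m)_{\xi\xi}$ and satisfies $U(\xi)\to u_\pm$ as $\xi\to\pm\infty$, then $u_\pm$ and $s$ satisfy the Rankine–Hugoniot condition $$s=\frac{f(u_+)-f(u_-)}{u_+-u_-}$$ and the generalized shock condition $g(u)<0$ for all $u\in(u_+,u_-)$. (2) (Sufficient condition.) If $s$ satisfies the Rankine–Hugoniot condition above and $g(u)<0$ for all $u\in(u_+,u_-)$, then there exists a monotonically decreasing solution $U(\xi)$ of $-sU_\xi+f(U)_\xi=\mu (U^m)_{\xi\xi}$ with $U(\pm\infty)=u_\pm$, and it is unique up to a shift in $\xi$. (3) (Decay properties.) In the non-degenerate case $f'(u_+)<s<f'(u_-)$ this profile satisfies $$|U_\xi|^{\frac{1}{2-m}}\sim |U(\xi)-u_+|\sim |\xi|^{-\frac{1}{1-m}}\ \text{ as }\xi\to+\infty,\qquad |U_\xi|\sim |U(\xi)-u_-|\sim e^{-\lambda|\xi|}\ \text{ as }\xi\to-\infty,$$ where $\lambda:=\frac{u_-^{1-m}}{\mu m}\big(f'(u_-)-s\big)>0$. In the degenerate case $f'(u_+)=s<f'(u_-)$,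 assuming moreover that $f''(u_+)=\cdots=f^{(k_+)}(u_+)=0$ and $f^{(k_++1)}(u_+)\neq 0$ for some integer $k_+\ge 1$, it satisfies $$|U_\xi|^{\frac{1}{k_++2-m}}\sim |U(\xi)-u_+|\sim |\xi|^{-\frac{1}{k_++1-m}}\ \text{ as }\xi\to+\infty,\qquad |U_\xi|\sim |U(\xi)-u_-|\sim e^{-\lambda|\xi|}\ \text{ as }\xi\to-\infty,$$ with the same $\lambda$.
   Context: For positive functions, $a(\xi)\sim b(\xi)$ as $\xi\to\xi_0$ means there is a constant $C\ge 1$ with $C^{-1}b\le a\le Cb$ in a neighborhood of $\xi_0$. Note that under the Rankine–Hugoniot condition $g(u)$ also equals $-s(u-u_+)+f(u)-f(u_+)$. *)

theory Defs
  imports "HOL-Analysis.Analysis"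
begin

definition smooth_fun :: "(real \<Rightarrow> real) \<Rightarrow> bool" where
  "smooth_fun f \<longleftrightarrow> (\<forall>n x. ((deriv ^^ n) f) differentiable (at x))"

definition dec_profile ::
  "real \<Rightarrow> real \<Rightarrow> (real \<Rightarrow> real) \<Rightarrow> real \<Rightarrow> real \<Rightarrow> real \<Rightarrow> (real \<Rightarrow> real) \<Rightarrow> bool" where
  "dec_profile m \<mu> f um up s U \<longleftrightarrow>
     antimono U \<and>
     (\<forall>\<xi>. U differentiable (at \<xi>)) \<and>
     (\<forall>\<xi>. (\<lambda>x. U x powr m) differentiable (at \<xi>)) \<and>
     (\<forall>\<xi>. deriv (\<lambda>x. U x powr m) differentiable (at \<xi>)) \<and>
     (\<forall>\<xi>. - s * deriv U \<xi> + deriv (\<lambda>x. f (U x)) \<xi>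
            = \<mu> * deriv (deriv (\<lambda>x. U x powr m)) \<xi>) \<and>
     (U \<longlongrightarrow> um) at_bot \<and> (U \<longlongrightarrow> up) at_top"

definition asym_equiv :: "(real \<Rightarrow> real) \<Rightarrow> (real \<Rightarrow> real) \<Rightarrow> real filter \<Rightarrow> bool" where
  "asym_equiv a b F \<longleftrightarrow>
     (\<exists>C\<ge>1. eventually (\<lambda>\<xi>. b \<xi> / C \<le> a \<xi> \<and> a \<xi> \<le> C * b \<xi>) F)"

end

theory Submission
  imports Defs
begin

text \<open>Integrating the profile equation once and using both end states turns it into
  \<open>\<mu> (U^m)' = g(U)\<close>, i.e. \<open>U' = h(U)\<close> with \<open>h(u) = g(u) u^(1-m) / (\<mu> m)\<close>; the two constants
  of integration must agree, which is the Rankine--Hugoniot condition. At a zero of \<open>g\<close> in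
  \<open>[0, u\<^sub>-]\<close> the field \<open>h\<close> is Lipschitz, so by Gronwall's inequality a profile can neither
  reach \<open>u\<^sub>\<plusminus>\<close> at a finite \<open>\<xi>\<close> nor pass through an interior zero of \<open>g\<close>; monotonicity then
  forces \<open>g < 0\<close> on \<open>(0, u\<^sub>-)\<close>. Conversely, if \<open>g < 0\<close> there, separation of variables
  \<open>\<xi> = \<Phi>(U) = \<integral> du / h(u)\<close> produces the profile: \<open>\<Phi>\<close> is unbounded at both ends because \<open>h\<close>
  vanishes at most linearly there, and every profile is a shift of the inverse of \<open>\<Phi>\<close>.

  Near \<open>u\<^sub>+ = 0\<close> we have \<open>-h(u) \<sim> u^q\<close> with \<open>q = p + 1 - m\<close>, where \<open>p\<close> (\<open>1\<close>, resp. \<open>k\<^sub>+ + 1\<close>)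
  is the order of the zero of \<open>g\<close>; hence \<open>U^(1-q)\<close> grows linearly in \<open>\<xi>\<close>. Near \<open>u\<^sub>-\<close>, \<open>h\<close> is
  linear with slope \<open>-\<lambda>\<close> up to a quadratic error, which is integrable against the crude
  exponential decay; this pins the rate down to exactly \<open>\<lambda>\<close>.\<close>

section \<open>Differential inequalities on the real line\<close>

lemma gronwall_zero_iff:
  fixes V V' :: "real \<Rightarrow> real"
  assumes "x0 \<le> x1"
    and der: "\<And>t. x0 \<le> t \<Longrightarrow> t \<le> x1 \<Longrightarrow> (V has_real_derivative V' t) (at t)"
    and bound: "\<And>t. x0 \<le> t \<Longrightarrow> t \<le> x1 \<Longrightarrow> \<bar>V' t\<bar> \<le> L * \<bar>V t\<bar>"
  shows "V x0 = 0 \<longleftrightarrow> V x1 = 0"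
proof -
  have weighted_der: "((\<lambda>t. (V t)\<^sup>2 * exp (c * t)) has_real_derivative
      exp (c * t) * (2 * V t * V' t + c * (V t)\<^sup>2)) (at t)"
    if "x0 \<le> t" "t \<le> x1" for c t
    using der[OF that] by (auto intro!: derivative_eq_intros simp: algebra_simps)
  have VV': "\<bar>2 * V t * V' t\<bar> \<le> 2 * L * (V t)\<^sup>2" if "x0 \<le> t" "t \<le> x1" for t
    using mult_left_mono[OF bound[OF that], of "2 * \<bar>V t\<bar>"]
    by (simp add: abs_mult power2_eq_square algebra_simps)
  have "(V x1)\<^sup>2 * exp (- 2 * L * x1) \<le> (V x0)\<^sup>2 * exp (- 2 * L * x0)"
  proof (rule DERIV_nonpos_imp_nonincreasing[OF \<open>x0 \<le> x1\<close>])
    fix t assume t: "x0 \<le> t" "t \<le> x1"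
    have "exp (- 2 * L * t) * (2 * V t * V' t + - 2 * L * (V t)\<^sup>2) \<le> 0"
      using VV'[OF t] by (intro mult_nonneg_nonpos) auto
    with weighted_der[OF t] show "\<exists>y. ((\<lambda>t. (V t)\<^sup>2 * exp (- 2 * L * t)) has_real_derivative y) (at t) \<and> y \<le> 0"
      by blast
  qed
  moreover have "(V x0)\<^sup>2 * exp (2 * L * x0) \<le> (V x1)\<^sup>2 * exp (2 * L * x1)"
  proof (rule DERIV_nonneg_imp_nondecreasing[OF \<open>x0 \<le> x1\<close>])
    fix t assume t: "x0 \<le> t" "t \<le> x1"
    have "0 \<le> exp (2 * L * t) * (2 * V t * V' t + 2 * L * (V t)\<^sup>2)"
      using VV'[OF t] by (intro mult_nonneg_nonneg) auto
    with weighted_der[OF t] show "\<exists>y. ((\<lambda>t. (V t)\<^sup>2 * exp (2 * L * t)) has_real_derivative y) (at t) \<and> 0 \<le> y"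
      by blast
  qed
  ultimately show ?thesis
    by (auto simp: mult_le_0_iff)
qed

lemma DERIV_imp_local_Lipschitz:
  fixes \<phi> :: "real \<Rightarrow> real"
  assumes "(\<phi> has_real_derivative D) (at c)"
  shows "\<exists>L \<delta>. 0 \<le> L \<and> 0 < \<delta> \<and> (\<forall>u. \<bar>u - c\<bar> < \<delta> \<longrightarrow> \<bar>\<phi> u - \<phi> c\<bar> \<le> L * \<bar>u - c\<bar>)"
proof -
  have "((\<lambda>y. (\<phi> y - \<phi> c) / (y - c)) \<longlongrightarrow> D) (at c)"
    using assms by (simp add: has_field_derivative_iff)
  from LIM_D[OF this, of 1] obtain \<delta> where "0 < \<delta>"
    and \<delta>: "\<And>y. y \<noteq> c \<Longrightarrow> \<bar>y - c\<bar> < \<delta> \<Longrightarrow> \<bar>(\<phi> y - \<phi> c) / (y - c) - D\<bar> < 1"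
    by auto
  have "\<bar>\<phi> u - \<phi> c\<bar> \<le> (\<bar>D\<bar> + 1) * \<bar>u - c\<bar>" if "\<bar>u - c\<bar> < \<delta>" for u
  proof (cases "u = c")
    case False
    with \<delta>[OF False that] have "\<bar>(\<phi> u - \<phi> c) / (u - c)\<bar> \<le> \<bar>D\<bar> + 1"
      by linarith
    then have "\<bar>\<phi> u - \<phi> c\<bar> / \<bar>u - c\<bar> \<le> \<bar>D\<bar> + 1"
      by (simp add: abs_divide)
    with False show ?thesis by (simp add: divide_le_eq)
  qed simp
  with \<open>0 < \<delta>\<close> show ?thesis
    by (intro exI[of _ "\<bar>D\<bar> + 1"] exI[of _ \<delta>]) auto
qed

lemma ode_avoids_equilibrium:
  fixes U U' :: "real \<Rightarrow> real"
  assumes der: "\<And>\<xi>. (U has_real_derivative U' \<xi>) (at \<xi>)"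
    and bound: "\<And>\<xi>. \<bar>U \<xi> - c\<bar> < \<delta> \<Longrightarrow> \<bar>U' \<xi>\<bar> \<le> L * \<bar>U \<xi> - c\<bar>" and "0 < \<delta>"
    and "U a \<noteq> c"
  shows "U \<xi> \<noteq> c"
proof -
  let ?S = "{\<xi>. U \<xi> = c}"
  have cont: "isCont U x" for x
    using der by (rule DERIV_isCont)
  have "closed ?S"
    using cont by (intro closed_Collect_eq continuous_at_imp_continuous_on) auto
  moreover have "open ?S"
  proof (rule openI)
    fix x assume "x \<in> ?S"
    obtain e where "0 < e" and e: "\<And>y. dist y x < e \<Longrightarrow> dist (U y) (U x) < \<delta>"
      using cont[of x] \<open>0 < \<delta>\<close> unfolding continuous_at_eps_delta by blast
    have "U y = c" if "y \<in> ball x e" for y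
    proof -
      have near: "\<bar>U t - c\<bar> < \<delta>" if "min x y \<le> t" "t \<le> max x y" for t
        using e[of t] \<open>x \<in> ?S\<close> \<open>y \<in> ball x e\<close> that by (auto simp: dist_real_def)
      have "U (min x y) - c = 0 \<longleftrightarrow> U (max x y) - c = 0"
      proof (rule gronwall_zero_iff[where V = "\<lambda>t. U t - c" and V' = U' and L = L])
        show "((\<lambda>t. U t - c) has_real_derivative U' t) (at t)" for t
          using der[of t] by (auto intro!: derivative_eq_intros)
        show "\<bar>U' t\<bar> \<le> L * \<bar>U t - c\<bar>" if "min x y \<le> t" "t \<le> max x y" for t
          using bound[OF near[OF that]] .
      qed simp
      with \<open>x \<in> ?S\<close> show ?thesis by (cases "x \<le> y") (auto simp: min_def max_def)
    qed
    with \<open>0 < e\<close> show "\<exists>e>0. ball x e \<subseteq> ?S"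
      by blast
  qed
  ultimately have "?S = {} \<or> ?S = UNIV"
    by (rule clopen[THEN iffD1, OF conjI])
  with \<open>U a \<noteq> c\<close> show ?thesis by auto
qed

lemma DERIV_tendsto_at_top_imp_zero:
  fixes P P' :: "real \<Rightarrow> real"
  assumes der: "\<And>x. (P has_real_derivative P' x) (at x)"
    and "(P \<longlongrightarrow> a) at_top" and "(P' \<longlongrightarrow> l) at_top"
  shows "l = 0"
proof (rule ccontr)
  assume "l \<noteq> 0"
  define e where "e = \<bar>l\<bar> / 2"
  have "0 < e" using \<open>l \<noteq> 0\<close> by (simp add: e_def)
  have "filterlim (\<lambda>x::real. 1 + x) at_top at_top"
    by (rule filterlim_tendsto_add_at_top[OF tendsto_const filterlim_ident])
  then have "((\<lambda>x. P (x + 1)) \<longlongrightarrow> a) at_top"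
    using filterlim_compose[OF \<open>(P \<longlongrightarrow> a) at_top\<close>] by (simp add: add.commute)
  then have "((\<lambda>x. P (x + 1) - P x) \<longlongrightarrow> a - a) at_top"
    using \<open>(P \<longlongrightarrow> a) at_top\<close> by (rule tendsto_diff)
  from tendstoD[OF this \<open>0 < e\<close>]
  have "eventually (\<lambda>x. \<bar>P (x + 1) - P x\<bar> < e) at_top"
    by (simp add: dist_real_def)
  moreover have "eventually (\<lambda>x. \<forall>y\<ge>x. \<bar>P' y - l\<bar> < e) at_top"
    using tendstoD[OF \<open>(P' \<longlongrightarrow> l) at_top\<close> \<open>0 < e\<close>]
    by (intro eventually_all_ge_at_top) (simp add: dist_real_def)
  ultimately have "eventually (\<lambda>x. \<bar>P (x + 1) - P x\<bar> < e \<and> (\<forall>y\<ge>x. \<bar>P' y - l\<bar> < e)) at_top"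
    by (rule eventually_conj)
  then obtain x where x: "\<bar>P (x + 1) - P x\<bar> < e" "\<And>y. x \<le> y \<Longrightarrow> \<bar>P' y - l\<bar> < e"
    unfolding eventually_at_top_linorder by blast
  obtain z where "x < z" "P (x + 1) - P x = P' z"
    using MVT2[of x "x + 1" P P'] der by force
  with x(1) x(2)[of z] show False unfolding e_def by linarith
qed

lemma DERIV_tendsto_at_bot_imp_zero:
  fixes P P' :: "real \<Rightarrow> real"
  assumes der: "\<And>x. (P has_real_derivative P' x) (at x)"
    and "(P \<longlongrightarrow> a) at_bot" and "(P' \<longlongrightarrow> l) at_bot"
  shows "l = 0"
proof -
  have "((\<lambda>x. P (- x)) has_real_derivative - P' (- x)) (at x)" for x
    using DERIV_chain2[OF der DERIV_minus[OF DERIV_ident]] by simp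
  moreover have "((\<lambda>x. P (- x)) \<longlongrightarrow> a) at_top"
    using \<open>(P \<longlongrightarrow> a) at_bot\<close> by (simp add: at_bot_mirror filterlim_filtermap)
  moreover have "((\<lambda>x. - P' (- x)) \<longlongrightarrow> - l) at_top"
    using \<open>(P' \<longlongrightarrow> l) at_bot\<close> by (intro tendsto_minus) (simp add: at_bot_mirror filterlim_filtermap)
  ultimately show "l = 0"
    using DERIV_tendsto_at_top_imp_zero by fastforce
qed

lemma DERIV_le_imp_diff_le:
  fixes F G :: "real \<Rightarrow> real"
  assumes "a \<le> b"
    and "\<And>t. a \<le> t \<Longrightarrow> t \<le> b \<Longrightarrow> (F has_real_derivative F' t) (at t)"
    and "\<And>t. a \<le> t \<Longrightarrow> t \<le> b \<Longrightarrow> (G has_real_derivative G' t) (at t)"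
    and "\<And>t. a \<le> t \<Longrightarrow> t \<le> b \<Longrightarrow> F' t \<le> G' t"
  shows "F b - F a \<le> G b - G a"
proof -
  have "(\<lambda>t. G t - F t) a \<le> (\<lambda>t. G t - F t) b"
  proof (rule DERIV_nonneg_imp_nondecreasing[OF \<open>a \<le> b\<close>])
    fix t assume "a \<le> t" "t \<le> b"
    with assms show "\<exists>y. ((\<lambda>t. G t - F t) has_real_derivative y) (at t) \<and> 0 \<le> y"
      by (intro exI[of _ "G' t - F' t"]) (auto intro: DERIV_diff)
  qed
  then show ?thesis by simp
qed

lemma DERIV_quadratic_remainder:
  fixes \<phi> \<phi>' :: "real \<Rightarrow> real"
  assumes der: "\<And>x. (\<phi> has_real_derivative \<phi>' x) (at x)"
    and der2: "(\<phi>' has_real_derivative D) (at c)"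
  shows "\<exists>K \<delta>. 0 \<le> K \<and> 0 < \<delta> \<and> (\<forall>u. \<bar>u - c\<bar> < \<delta> \<longrightarrow> \<bar>\<phi> u - \<phi> c - \<phi>' c * (u - c)\<bar> \<le> K * (u - c)\<^sup>2)"
proof -
  obtain L \<delta> where "0 \<le> L" "0 < \<delta>" and L: "\<And>t. \<bar>t - c\<bar> < \<delta> \<Longrightarrow> \<bar>\<phi>' t - \<phi>' c\<bar> \<le> L * \<bar>t - c\<bar>"
    using DERIV_imp_local_Lipschitz[OF der2] by blast
  have "\<bar>\<phi> u - \<phi> c - \<phi>' c * (u - c)\<bar> \<le> L * (u - c)\<^sup>2" if u: "\<bar>u - c\<bar> < \<delta>" for u
  proof -
    obtain t where t: "\<bar>t - c\<bar> \<le> \<bar>u - c\<bar>" "\<phi> u - \<phi> c = (u - c) * \<phi>' t"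
    proof (cases u c rule: linorder_cases)
      case less
      then obtain t where "u < t" "t < c" "\<phi> c - \<phi> u = (c - u) * \<phi>' t"
        using MVT2[of u c \<phi> \<phi>'] der by force
      then show ?thesis by (intro that[of t]) (auto simp: algebra_simps)
    next
      case greater
      then obtain t where "c < t" "t < u" "\<phi> u - \<phi> c = (u - c) * \<phi>' t"
        using MVT2[of c u \<phi> \<phi>'] der by force
      then show ?thesis by (intro that[of t]) auto
    qed (use that in auto)
    have "\<bar>\<phi> u - \<phi> c - \<phi>' c * (u - c)\<bar> = \<bar>u - c\<bar> * \<bar>\<phi>' t - \<phi>' c\<bar>"
      by (simp add: t(2) abs_mult[symmetric] algebra_simps)
    also have "\<dots> \<le> \<bar>u - c\<bar> * (L * \<bar>u - c\<bar>)"
      using L[of t] t(1) u mult_left_mono[of "\<bar>t - c\<bar>" "\<bar>u - c\<bar>" L] \<open>0 \<le> L\<close>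
      by (intro mult_left_mono) auto
    finally show ?thesis
      by (simp add: power2_eq_square abs_mult_self_eq algebra_simps)
  qed
  with \<open>0 \<le> L\<close> \<open>0 < \<delta>\<close> show ?thesis by blast
qed

lemma log_DERIV_ge_imp_le_exp:
  fixes V V' :: "real \<Rightarrow> real"
  assumes "t \<le> t0"
    and der: "\<And>s. t \<le> s \<Longrightarrow> s \<le> t0 \<Longrightarrow> (V has_real_derivative V' s) (at s)"
    and pos: "\<And>s. t \<le> s \<Longrightarrow> s \<le> t0 \<Longrightarrow> 0 < V s"
    and rate: "\<And>s. t \<le> s \<Longrightarrow> s \<le> t0 \<Longrightarrow> r * V s \<le> V' s"
  shows "V t \<le> V t0 * exp (r * (t - t0))"
proof -
  have "(\<lambda>s. r * s) t0 - (\<lambda>s. r * s) t \<le> ln (V t0) - ln (V t)"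
  proof (rule DERIV_le_imp_diff_le[OF \<open>t \<le> t0\<close>, where F' = "\<lambda>_. r" and G' = "\<lambda>s. V' s / V s"])
    fix s assume s: "t \<le> s" "s \<le> t0"
    show "((\<lambda>s. r * s) has_real_derivative r) (at s)"
      by (auto intro!: derivative_eq_intros)
    show "((\<lambda>s. ln (V s)) has_real_derivative V' s / V s) (at s)"
      using DERIV_chain2[OF DERIV_ln_divide[OF pos[OF s]] der[OF s]] by simp
    show "r \<le> V' s / V s"
      using rate[OF s] pos[OF s] by (simp add: pos_le_divide_eq)
  qed
  then have "exp (ln (V t)) \<le> exp (ln (V t0) + r * (t - t0))"
    by (simp add: algebra_simps)
  then show ?thesis
    using pos[of t] pos[of t0] \<open>t \<le> t0\<close> by (simp add: exp_add)
qed

lemma DERIV_abs_le_exp_imp_abs_diff_le: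
  fixes F F' :: "real \<Rightarrow> real"
  assumes "t \<le> t0" and "0 < a"
    and der: "\<And>s. t \<le> s \<Longrightarrow> s \<le> t0 \<Longrightarrow> (F has_real_derivative F' s) (at s)"
    and bound: "\<And>s. t \<le> s \<Longrightarrow> s \<le> t0 \<Longrightarrow> \<bar>F' s\<bar> \<le> c * exp (a * s)"
  shows "\<bar>F t - F t0\<bar> \<le> c / a * exp (a * t0)"
proof -
  define E where "E s = c / a * exp (a * s)" for s
  have E_der: "(E has_real_derivative c * exp (a * s)) (at s)" for s
    unfolding E_def[abs_def] using \<open>0 < a\<close> by (auto intro!: derivative_eq_intros)
  have "0 \<le> c * exp (a * t)"
    using bound[OF order_refl \<open>t \<le> t0\<close>] by linarith
  then have "0 \<le> E t"
    using \<open>0 < a\<close> by (simp add: E_def zero_le_mult_iff)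
  have "F t0 - F t \<le> E t0 - E t"
  proof (rule DERIV_le_imp_diff_le[OF \<open>t \<le> t0\<close> der E_der])
    show "F' s \<le> c * exp (a * s)" if "t \<le> s" "s \<le> t0" for s
      using bound[OF that] by (simp add: abs_le_iff)
  qed
  moreover have "(\<lambda>s. - F s) t0 - (\<lambda>s. - F s) t \<le> E t0 - E t"
  proof (rule DERIV_le_imp_diff_le[OF \<open>t \<le> t0\<close> DERIV_minus[OF der] E_der])
    show "- F' s \<le> c * exp (a * s)" if "t \<le> s" "s \<le> t0" for s
      using bound[OF that] by (simp add: abs_le_iff)
  qed
  ultimately show ?thesis
    using \<open>0 \<le> E t\<close> unfolding E_def by auto
qed

section \<open>Two-sided asymptotic equivalence\<close>

lemma asym_equivI:
  assumes "0 < c1" "0 < c2"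
    and "eventually (\<lambda>x. 0 \<le> b x \<and> c1 * b x \<le> a x \<and> a x \<le> c2 * b x) F"
  shows "asym_equiv a b F"
  unfolding asym_equiv_def
proof (intro exI conjI)
  let ?C = "max 1 (max c2 (1 / c1))"
  show "1 \<le> ?C" by simp
  have "1 / ?C \<le> 1 / (1 / c1)"
    using \<open>0 < c1\<close> by (intro divide_left_mono) auto
  then have "1 / ?C \<le> c1" by simp
  show "eventually (\<lambda>x. b x / ?C \<le> a x \<and> a x \<le> ?C * b x) F"
    using assms(3)
  proof eventually_elim
    case (elim x)
    have "b x / ?C \<le> c1 * b x"
      using mult_right_mono[OF \<open>1 / ?C \<le> c1\<close>, of "b x"] elim by simp
    moreover have "c2 * b x \<le> ?C * b x"
      using elim by (intro mult_right_mono) auto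
    ultimately show ?case using elim by linarith
  qed
qed

lemma asym_equivE:
  assumes "asym_equiv a b F"
  obtains c1 c2 where "0 < c1" "0 < c2"
    and "eventually (\<lambda>x. c1 * b x \<le> a x \<and> a x \<le> c2 * b x) F"
proof -
  obtain C where "1 \<le> C" and C: "eventually (\<lambda>x. b x / C \<le> a x \<and> a x \<le> C * b x) F"
    using assms unfolding asym_equiv_def by blast
  show ?thesis
    by (rule that[of "1 / C" C]) (use \<open>1 \<le> C\<close> C in auto)
qed

lemma asym_equiv_cong:
  assumes "asym_equiv a b F" and "eventually (\<lambda>x. a x = a' x \<and> b x = b' x) F"
  shows "asym_equiv a' b' F"
proof -
  obtain C where "1 \<le> C" and "eventually (\<lambda>x. b x / C \<le> a x \<and> a x \<le> C * b x) F"
    using assms(1) unfolding asym_equiv_def by blast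
  from this(2) assms(2) have "eventually (\<lambda>x. b' x / C \<le> a' x \<and> a' x \<le> C * b' x) F"
    by eventually_elim auto
  with \<open>1 \<le> C\<close> show ?thesis unfolding asym_equiv_def by blast
qed

lemma asym_equiv_compose:
  assumes "asym_equiv a b F" and "filterlim g F G"
  shows "asym_equiv (\<lambda>x. a (g x)) (\<lambda>x. b (g x)) G"
  using assms unfolding asym_equiv_def filterlim_iff by blast

lemma asym_equiv_powr:
  assumes "asym_equiv a b F" and "eventually (\<lambda>x. 0 < b x) F"
  shows "asym_equiv (\<lambda>x. a x powr p) (\<lambda>x. b x powr p) F"
proof -
  obtain c1 c2 where "0 < c1" "0 < c2" and c: "eventually (\<lambda>x. c1 * b x \<le> a x \<and> a x \<le> c2 * b x) F"
    using assms(1) by (rule asym_equivE)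
  let ?lo = "min (c1 powr p) (c2 powr p)" and ?hi = "max (c1 powr p) (c2 powr p)"
  show ?thesis
  proof (rule asym_equivI)
    show "0 < ?lo" "0 < ?hi" using \<open>0 < c1\<close> \<open>0 < c2\<close> by (auto simp: less_max_iff_disj)
    show "eventually (\<lambda>x. 0 \<le> b x powr p \<and> ?lo * b x powr p \<le> a x powr p \<and> a x powr p \<le> ?hi * b x powr p) F"
      using c assms(2)
    proof eventually_elim
      case (elim x)
      then have "0 < c1 * b x" "0 < c2 * b x" using \<open>0 < c1\<close> \<open>0 < c2\<close> by auto
      then have bounds: "(c1 * b x) powr p \<le> a x powr p \<and> a x powr p \<le> (c2 * b x) powr p
          \<or> (c2 * b x) powr p \<le> a x powr p \<and> a x powr p \<le> (c1 * b x) powr p"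
        using elim by (cases "0 \<le> p") (auto intro: powr_mono2 powr_mono2')
      have "?lo * b x powr p \<le> (c1 * b x) powr p" "?lo * b x powr p \<le> (c2 * b x) powr p"
        "(c1 * b x) powr p \<le> ?hi * b x powr p" "(c2 * b x) powr p \<le> ?hi * b x powr p"
        using elim \<open>0 < c1\<close> \<open>0 < c2\<close> by (auto simp: powr_mult intro: mult_right_mono)
      with bounds show ?case by auto
    qed
  qed
qed

lemma DERIV_bounds_imp_asym_equiv_abs:
  fixes Y Y' :: "real \<Rightarrow> real"
  assumes der: "\<And>\<xi>. (Y has_real_derivative Y' \<xi>) (at \<xi>)" and "0 < A1"
    and slope: "eventually (\<lambda>\<xi>. A1 \<le> Y' \<xi> \<and> Y' \<xi> \<le> A2) at_top"
  shows "asym_equiv Y (\<lambda>\<xi>. \<bar>\<xi>\<bar>) at_top"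
proof -
  obtain N where N: "\<And>t. N \<le> t \<Longrightarrow> A1 \<le> Y' t \<and> Y' t \<le> A2"
    using slope unfolding eventually_at_top_linorder by blast
  define \<xi>0 where "\<xi>0 = max N 0"
  have "0 \<le> \<xi>0" and \<xi>0: "\<And>t. \<xi>0 \<le> t \<Longrightarrow> A1 \<le> Y' t" "\<And>t. \<xi>0 \<le> t \<Longrightarrow> Y' t \<le> A2"
    using N unfolding \<xi>0_def by auto
  have growth: "A1 * (\<xi> - \<xi>0) \<le> Y \<xi> - Y \<xi>0 \<and> Y \<xi> - Y \<xi>0 \<le> A2 * (\<xi> - \<xi>0)" if "\<xi>0 \<le> \<xi>" for \<xi>
  proof
    have "(\<lambda>t. A1 * t) \<xi> - (\<lambda>t. A1 * t) \<xi>0 \<le> Y \<xi> - Y \<xi>0"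
      by (rule DERIV_le_imp_diff_le[OF that, of _ "\<lambda>_. A1" _ Y'])
        (auto intro!: derivative_eq_intros der \<xi>0)
    then show "A1 * (\<xi> - \<xi>0) \<le> Y \<xi> - Y \<xi>0" by (simp add: algebra_simps)
    have "Y \<xi> - Y \<xi>0 \<le> (\<lambda>t. A2 * t) \<xi> - (\<lambda>t. A2 * t) \<xi>0"
      by (rule DERIV_le_imp_diff_le[OF that, of _ Y' _ "\<lambda>_. A2"])
        (auto intro!: derivative_eq_intros der \<xi>0)
    then show "Y \<xi> - Y \<xi>0 \<le> A2 * (\<xi> - \<xi>0)" by (simp add: algebra_simps)
  qed
  show ?thesis
  proof (rule asym_equivI)
    show "0 < A1 / 2" "0 < \<bar>Y \<xi>0\<bar> + \<bar>A2\<bar> + 1" using \<open>0 < A1\<close> by auto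
    show "eventually (\<lambda>\<xi>. 0 \<le> \<bar>\<xi>\<bar> \<and> A1 / 2 * \<bar>\<xi>\<bar> \<le> Y \<xi> \<and> Y \<xi> \<le> (\<bar>Y \<xi>0\<bar> + \<bar>A2\<bar> + 1) * \<bar>\<xi>\<bar>) at_top"
      unfolding eventually_at_top_linorder
    proof (intro exI allI impI)
      fix \<xi> assume "max (max 1 \<xi>0) (2 * \<xi>0 + 2 * \<bar>Y \<xi>0\<bar> / A1) \<le> \<xi>"
      then have "\<xi>0 \<le> \<xi>" "1 \<le> \<xi>" and large: "A1 * \<xi>0 + \<bar>Y \<xi>0\<bar> \<le> A1 / 2 * \<xi>"
        using \<open>0 < A1\<close> by (auto simp: field_simps)
      have "A2 * (\<xi> - \<xi>0) \<le> \<bar>A2\<bar> * (\<xi> - \<xi>0)"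
        using \<open>\<xi>0 \<le> \<xi>\<close> by (intro mult_right_mono) auto
      also have "\<dots> \<le> \<bar>A2\<bar> * \<xi>"
        using \<open>0 \<le> \<xi>0\<close> by (intro mult_left_mono) auto
      finally have "A2 * (\<xi> - \<xi>0) \<le> \<bar>A2\<bar> * \<xi>" .
      moreover have "\<bar>Y \<xi>0\<bar> \<le> \<bar>Y \<xi>0\<bar> * \<xi>"
        using \<open>1 \<le> \<xi>\<close> by (simp add: mult_le_cancel_left1)
      moreover have "A1 * (\<xi> - \<xi>0) = A1 * \<xi> - A1 * \<xi>0"
        "(\<bar>Y \<xi>0\<bar> + \<bar>A2\<bar> + 1) * \<xi> = \<bar>Y \<xi>0\<bar> * \<xi> + \<bar>A2\<bar> * \<xi> + \<xi>"
        by (simp_all add: algebra_simps)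
      moreover have "\<bar>\<xi>\<bar> = \<xi>"
        using \<open>1 \<le> \<xi>\<close> by simp
      ultimately show "0 \<le> \<bar>\<xi>\<bar> \<and> A1 / 2 * \<bar>\<xi>\<bar> \<le> Y \<xi> \<and> Y \<xi> \<le> (\<bar>Y \<xi>0\<bar> + \<bar>A2\<bar> + 1) * \<bar>\<xi>\<bar>"
        using growth[OF \<open>\<xi>0 \<le> \<xi>\<close>] \<open>1 \<le> \<xi>\<close> large abs_ge_self[of "Y \<xi>0"] abs_ge_minus_self[of "Y \<xi>0"]
        by (simp only:) linarith
    qed
  qed
qed

lemma power_ode_deriv_asym_equiv:
  fixes U D :: "real \<Rightarrow> real"
  assumes pos: "\<And>\<xi>. 0 < U \<xi>" and "0 < q"
    and equiv: "asym_equiv (\<lambda>\<xi>. - D \<xi>) (\<lambda>\<xi>. U \<xi> powr q) F"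
  shows "asym_equiv (\<lambda>\<xi>. \<bar>D \<xi>\<bar> powr (1 / q)) U F"
proof -
  obtain c1 c2 where "0 < c1" "0 < c2"
    and c: "eventually (\<lambda>\<xi>. c1 * U \<xi> powr q \<le> - D \<xi> \<and> - D \<xi> \<le> c2 * U \<xi> powr q) F"
    using equiv by (rule asym_equivE)
  have "U \<xi> \<noteq> 0" for \<xi>
    using pos[of \<xi>] by simp
  then have "asym_equiv (\<lambda>\<xi>. (- D \<xi>) powr (1 / q)) (\<lambda>\<xi>. (U \<xi> powr q) powr (1 / q)) F"
    by (intro asym_equiv_powr[OF equiv]) simp
  moreover have "eventually (\<lambda>\<xi>. (- D \<xi>) powr (1 / q) = \<bar>D \<xi>\<bar> powr (1 / q)
      \<and> (U \<xi> powr q) powr (1 / q) = U \<xi>) F"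
    using c
  proof eventually_elim
    case (elim \<xi>)
    have "0 < c1 * U \<xi> powr q"
      using \<open>0 < c1\<close> pos[of \<xi>] by simp
    with elim have "0 \<le> - D \<xi>"
      by linarith
    then show ?case
      using \<open>0 < q\<close> pos[of \<xi>] by (simp add: powr_powr)
  qed
  ultimately show ?thesis
    by (rule asym_equiv_cong)
qed

lemma power_ode_decay_at_top:
  fixes U D :: "real \<Rightarrow> real"
  assumes der: "\<And>\<xi>. (U has_real_derivative D \<xi>) (at \<xi>)" and pos: "\<And>\<xi>. 0 < U \<xi>"
    and "1 < q" and equiv: "asym_equiv (\<lambda>\<xi>. - D \<xi>) (\<lambda>\<xi>. U \<xi> powr q) at_top"
  shows "asym_equiv U (\<lambda>\<xi>. \<bar>\<xi>\<bar> powr (- 1 / (q - 1))) at_top"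
proof -
  obtain c1 c2 where "0 < c1" "0 < c2"
    and c: "eventually (\<lambda>\<xi>. c1 * U \<xi> powr q \<le> - D \<xi> \<and> - D \<xi> \<le> c2 * U \<xi> powr q) at_top"
    using equiv by (rule asym_equivE)
  define Y where "Y \<xi> = U \<xi> powr (1 - q)" for \<xi>
  have Y_der: "(Y has_real_derivative (q - 1) * (- D \<xi> / U \<xi> powr q)) (at \<xi>)" for \<xi>
  proof -
    have "(Y has_real_derivative (1 - q) * U \<xi> powr (1 - q - 1) * D \<xi>) (at \<xi>)"
      unfolding Y_def using DERIV_fun_powr[OF der pos, of "1 - q"] by simp
    moreover have "U \<xi> powr (1 - q - 1) = 1 / U \<xi> powr q"
      using pos[of \<xi>] by (simp add: powr_minus_divide)
    moreover have "(1 - q) * (1 / b) * d = (q - 1) * (- d / b)" for b d :: real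
      by (cases "b = 0") (simp_all add: field_simps)
    ultimately show ?thesis by simp
  qed
  have "eventually (\<lambda>\<xi>. (q - 1) * c1 \<le> (q - 1) * (- D \<xi> / U \<xi> powr q)
      \<and> (q - 1) * (- D \<xi> / U \<xi> powr q) \<le> (q - 1) * c2) at_top"
    using c
  proof eventually_elim
    case (elim \<xi>)
    have "0 < U \<xi> powr q"
      using pos[of \<xi>] by simp
    with elim have "c1 \<le> - D \<xi> / U \<xi> powr q" "- D \<xi> / U \<xi> powr q \<le> c2"
      by (subst pos_le_divide_eq pos_divide_le_eq; simp)+
    with \<open>1 < q\<close> show ?case by (intro conjI mult_left_mono) simp_all
  qed
  then have "asym_equiv Y (\<lambda>\<xi>. \<bar>\<xi>\<bar>) at_top"
    using \<open>0 < c1\<close> \<open>1 < q\<close> by (intro DERIV_bounds_imp_asym_equiv_abs[OF Y_der]) auto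
  moreover have "eventually (\<lambda>\<xi>::real. 0 < \<bar>\<xi>\<bar>) at_top"
    by (rule eventually_mono[OF eventually_gt_at_top[of 0]]) simp
  ultimately have "asym_equiv (\<lambda>\<xi>. Y \<xi> powr (- 1 / (q - 1))) (\<lambda>\<xi>. \<bar>\<xi>\<bar> powr (- 1 / (q - 1))) at_top"
    by (rule asym_equiv_powr)
  moreover have "(1 - q) * (- 1 / (q - 1)) = 1"
    using \<open>1 < q\<close> by (simp add: field_simps)
  then have "Y \<xi> powr (- 1 / (q - 1)) = U \<xi>" for \<xi>
    using pos[of \<xi>] by (simp add: Y_def powr_powr)
  ultimately show ?thesis
    by simp
qed

lemma linear_ode_rate_at_bot:
  fixes V V' :: "real \<Rightarrow> real"
  assumes pos: "\<And>\<xi>. 0 < V \<xi>" and lim: "(V \<longlongrightarrow> 0) at_bot" and "0 < lam"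
    and close: "eventually (\<lambda>\<xi>. \<bar>V' \<xi> - lam * V \<xi>\<bar> \<le> K * (V \<xi>)\<^sup>2) at_bot"
  shows "eventually (\<lambda>\<xi>. lam / 2 * V \<xi> \<le> V' \<xi> \<and> V' \<xi> \<le> 3 * lam / 2 * V \<xi>) at_bot"
proof -
  have "((\<lambda>\<xi>. K * V \<xi>) \<longlongrightarrow> K * 0) at_bot"
    by (intro tendsto_mult tendsto_const lim)
  then have "eventually (\<lambda>\<xi>. K * V \<xi> < lam / 2) at_bot"
    using \<open>0 < lam\<close> by (intro order_tendstoD(2)) auto
  with close show ?thesis
  proof eventually_elim
    case (elim \<xi>)
    then have "K * (V \<xi>)\<^sup>2 \<le> lam / 2 * V \<xi>"
      using pos[of \<xi>] mult_right_mono[of "K * V \<xi>" "lam / 2" "V \<xi>"] by (simp add: power2_eq_square mult_ac)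
    with elim show ?case
      by (auto simp: abs_le_iff)
  qed
qed

lemma linear_ode_deriv_asym_equiv_at_bot:
  fixes V V' :: "real \<Rightarrow> real"
  assumes pos: "\<And>\<xi>. 0 < V \<xi>" and lim: "(V \<longlongrightarrow> 0) at_bot" and "0 < lam"
    and close: "eventually (\<lambda>\<xi>. \<bar>V' \<xi> - lam * V \<xi>\<bar> \<le> K * (V \<xi>)\<^sup>2) at_bot"
  shows "asym_equiv (\<lambda>\<xi>. \<bar>V' \<xi>\<bar>) V at_bot"
proof (rule asym_equivI)
  show "0 < lam / 2" "0 < 3 * lam / 2"
    using \<open>0 < lam\<close> by auto
  show "eventually (\<lambda>\<xi>. 0 \<le> V \<xi> \<and> lam / 2 * V \<xi> \<le> \<bar>V' \<xi>\<bar> \<and> \<bar>V' \<xi>\<bar> \<le> 3 * lam / 2 * V \<xi>) at_bot"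
    using linear_ode_rate_at_bot[OF pos lim \<open>0 < lam\<close> close]
  proof eventually_elim
    case (elim \<xi>)
    moreover have "0 \<le> lam / 2 * V \<xi>"
      using \<open>0 < lam\<close> pos[of \<xi>] by simp
    ultimately show ?case
      using pos[of \<xi>] by auto
  qed
qed

lemma linear_ode_decay_at_bot:
  fixes V V' :: "real \<Rightarrow> real"
  assumes der: "\<And>\<xi>. (V has_real_derivative V' \<xi>) (at \<xi>)" and pos: "\<And>\<xi>. 0 < V \<xi>"
    and lim: "(V \<longlongrightarrow> 0) at_bot" and "0 < lam"
    and close: "eventually (\<lambda>\<xi>. \<bar>V' \<xi> - lam * V \<xi>\<bar> \<le> K * (V \<xi>)\<^sup>2) at_bot"
  shows "asym_equiv V (\<lambda>\<xi>. exp (- lam * \<bar>\<xi>\<bar>)) at_bot"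
proof -
  from close linear_ode_rate_at_bot[OF pos lim \<open>0 < lam\<close> close]
  have "eventually (\<lambda>\<xi>. \<bar>V' \<xi> - lam * V \<xi>\<bar> \<le> K * V \<xi> * V \<xi> \<and> lam / 2 * V \<xi> \<le> V' \<xi>) at_bot"
    by eventually_elim (simp add: power2_eq_square mult_ac)
  then obtain N where N: "\<And>t. t \<le> N \<Longrightarrow> \<bar>V' t - lam * V t\<bar> \<le> K * V t * V t \<and> lam / 2 * V t \<le> V' t"
    unfolding eventually_at_bot_linorder by blast
  define \<xi>0 where "\<xi>0 = min N 0"
  have "\<xi>0 \<le> 0" and near: "\<And>t. t \<le> \<xi>0 \<Longrightarrow> \<bar>V' t - lam * V t\<bar> \<le> K * V t * V t \<and> lam / 2 * V t \<le> V' t"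
    using N unfolding \<xi>0_def by auto
  have "0 \<le> K * V \<xi>0 * V \<xi>0"
    using near[of \<xi>0] by (meson abs_ge_zero order_trans order_refl)
  then have "0 \<le> K"
    using pos[of \<xi>0] by (simp add: zero_le_mult_iff)
  txt \<open>The crude rate \<open>lam / 2\<close> makes the defect \<open>(ln V)' - lam = O(V)\<close> integrable at \<open>-\<infinity>\<close>,
    so \<open>ln V - lam \<xi>\<close> stays bounded.\<close>
  define F where "F t = ln (V t) - lam * t" for t
  define M where "M = V \<xi>0 * exp (- lam / 2 * \<xi>0)"
  define B where "B = K * M / (lam / 2) * exp (lam / 2 * \<xi>0)"
  have F_bounded: "\<bar>F t - F \<xi>0\<bar> \<le> B" if "t \<le> \<xi>0" for t
    unfolding B_def
  proof (rule DERIV_abs_le_exp_imp_abs_diff_le[OF that])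
    fix s assume s: "t \<le> s" "s \<le> \<xi>0"
    show "(F has_real_derivative V' s / V s - lam) (at s)"
      unfolding F_def[abs_def]
      using DERIV_diff[OF DERIV_chain2[OF DERIV_ln_divide[OF pos] der] DERIV_cmult[OF DERIV_ident, of lam]]
      by simp
    have "V s \<le> V \<xi>0 * exp (lam / 2 * (s - \<xi>0))"
      using near s by (intro log_DERIV_ge_imp_le_exp[OF \<open>s \<le> \<xi>0\<close> der pos]) auto
    moreover have "exp (lam / 2 * (s - \<xi>0)) = exp (- lam / 2 * \<xi>0) * exp (lam / 2 * s)"
      by (simp add: field_simps flip: exp_add)
    ultimately have "V s \<le> M * exp (lam / 2 * s)"
      by (simp add: M_def mult.assoc)
    have "\<bar>V' s / V s - lam\<bar> = \<bar>V' s - lam * V s\<bar> / V s"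
      using pos[of s] by (simp add: field_simps)
    also have "\<dots> \<le> K * V s"
      using near[of s] s pos[of s] by (simp add: divide_le_eq)
    also have "\<dots> \<le> K * M * exp (lam / 2 * s)"
      using \<open>V s \<le> M * exp (lam / 2 * s)\<close> \<open>0 \<le> K\<close> by (simp add: mult.assoc mult_left_mono)
    finally show "\<bar>V' s / V s - lam\<bar> \<le> K * M * exp (lam / 2 * s)" .
  qed (use \<open>0 < lam\<close> in simp)
  show ?thesis
  proof (rule asym_equivI)
    show "0 < exp (F \<xi>0 - B)" "0 < exp (F \<xi>0 + B)" by simp_all
    show "eventually (\<lambda>\<xi>. 0 \<le> exp (- lam * \<bar>\<xi>\<bar>) \<and> exp (F \<xi>0 - B) * exp (- lam * \<bar>\<xi>\<bar>) \<le> V \<xi>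
        \<and> V \<xi> \<le> exp (F \<xi>0 + B) * exp (- lam * \<bar>\<xi>\<bar>)) at_bot"
      unfolding eventually_at_bot_linorder
    proof (intro exI allI impI)
      fix t assume "t \<le> \<xi>0"
      then have "V t = exp (F t) * exp (- lam * \<bar>t\<bar>)"
        using \<open>\<xi>0 \<le> 0\<close> pos[of t] by (simp add: F_def exp_diff exp_minus field_simps)
      with F_bounded[OF \<open>t \<le> \<xi>0\<close>]
      show "0 \<le> exp (- lam * \<bar>t\<bar>) \<and> exp (F \<xi>0 - B) * exp (- lam * \<bar>t\<bar>) \<le> V t
          \<and> V t \<le> exp (F \<xi>0 + B) * exp (- lam * \<bar>t\<bar>)"
        by (auto simp: abs_le_iff)
    qed
  qed
qed

section \<open>The profile equation and the necessary conditions\<close>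

locale porous_shock =
  fixes m \<mu> um :: real and f :: "real \<Rightarrow> real"
  assumes m_pos: "0 < m" and m_less_1: "m < 1" and \<mu>_pos: "0 < \<mu>"
    and f_smooth: "smooth_fun f" and um_pos: "0 < um"
begin

definition shock_fun :: "real \<Rightarrow> real \<Rightarrow> real" where
  "shock_fun s u = - s * (u - um) + f u - f um"

text \<open>Since
  \<open>0 powr _ = 0\<close>, also \<open>h(0) = 0\<close>, matching \<open>U' = 0\<close> at a zero of a profile \<open>U \<ge> 0\<close>.\<close>
definition profile_field :: "real \<Rightarrow> real \<Rightarrow> real" where
  "profile_field s u = shock_fun s u * u powr (1 - m) / (\<mu> * m)"

lemma higher_deriv_has_deriv: "((deriv ^^ k) f has_real_derivative (deriv ^^ Suc k) f x) (at x)"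
  using f_smooth unfolding smooth_fun_def by (simp add: DERIV_deriv_iff_real_differentiable)

lemma f_has_deriv: "(f has_real_derivative deriv f x) (at x)"
  using higher_deriv_has_deriv[of 0] by simp

lemma shock_fun_has_deriv: "(shock_fun s has_real_derivative deriv f u - s) (at u)"
  unfolding shock_fun_def[abs_def] by (auto intro!: derivative_eq_intros f_has_deriv)

lemma shock_fun_um [simp]: "shock_fun s um = 0"
  by (simp add: shock_fun_def)

lemma shock_fun_zero_if_RH: "s = (f 0 - f um) / (0 - um) \<Longrightarrow> shock_fun s 0 = 0"
  using um_pos by (simp add: shock_fun_def field_simps)

lemma profile_field_0 [simp]: "profile_field s 0 = 0"
  by (simp add: profile_field_def)

lemma profile_field_neg_iff:
  "0 < u \<Longrightarrow> profile_field s u < 0 \<longleftrightarrow> shock_fun s u < 0"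
  using m_pos \<mu>_pos by (simp add: profile_field_def divide_less_0_iff mult_less_0_iff)

lemma profile_field_nonpos_iff:
  "0 < u \<Longrightarrow> profile_field s u \<le> 0 \<longleftrightarrow> shock_fun s u \<le> 0"
  using m_pos \<mu>_pos by (simp add: profile_field_def divide_le_0_iff mult_le_0_iff)

lemma profile_field_Lipschitz_at_shock_fun_zero:
  assumes "shock_fun s c = 0" "0 \<le> c"
  shows "\<exists>L \<delta>. 0 < \<delta> \<and> (\<forall>u\<ge>0. \<bar>u - c\<bar> < \<delta> \<longrightarrow> \<bar>profile_field s u\<bar> \<le> L * \<bar>u - c\<bar>)"
proof -
  obtain L \<delta> where "0 \<le> L" "0 < \<delta>" and L: "\<And>u. \<bar>u - c\<bar> < \<delta> \<Longrightarrow> \<bar>shock_fun s u\<bar> \<le> L * \<bar>u - c\<bar>"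
    using DERIV_imp_local_Lipschitz[OF shock_fun_has_deriv[of s c]] assms(1) by auto
  have "\<bar>profile_field s u\<bar> \<le> L * (c + 1) powr (1 - m) / (\<mu> * m) * \<bar>u - c\<bar>"
    if "0 \<le> u" "\<bar>u - c\<bar> < min \<delta> 1" for u
  proof -
    have "u powr (1 - m) \<le> (c + 1) powr (1 - m)"
      using that m_less_1 by (intro powr_mono2) auto
    then have "\<bar>shock_fun s u\<bar> * u powr (1 - m) \<le> L * \<bar>u - c\<bar> * (c + 1) powr (1 - m)"
      using L that \<open>0 \<le> L\<close> by (intro mult_mono) auto
    then have "\<bar>shock_fun s u\<bar> * u powr (1 - m) / (\<mu> * m) \<le> L * \<bar>u - c\<bar> * (c + 1) powr (1 - m) / (\<mu> * m)"
      using \<mu>_pos m_pos by (intro divide_right_mono) auto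
    then show ?thesis
      using \<mu>_pos m_pos that by (simp add: profile_field_def abs_mult abs_divide mult_ac)
  qed
  moreover have "0 < min \<delta> 1" using \<open>0 < \<delta>\<close> by simp
  ultimately show ?thesis by blast
qed

lemma dec_profile_bounds:
  assumes "dec_profile m \<mu> f um 0 s U"
  shows "0 \<le> U \<xi>" and "U \<xi> \<le> um"
proof -
  from assms have "antimono U" "(U \<longlongrightarrow> um) at_bot" "(U \<longlongrightarrow> 0) at_top"
    unfolding dec_profile_def by auto
  show "0 \<le> U \<xi>"
    by (rule tendsto_upperbound[OF \<open>(U \<longlongrightarrow> 0) at_top\<close>])
      (use \<open>antimono U\<close> in \<open>auto simp: eventually_at_top_linorder antimono_def\<close>)
  show "U \<xi> \<le> um"
    by (rule tendsto_lowerbound[OF \<open>(U \<longlongrightarrow> um) at_bot\<close>])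
      (use \<open>antimono U\<close> in \<open>auto simp: eventually_at_bot_linorder antimono_def\<close>)
qed

lemma dec_profile_flux_constant:
  assumes P: "dec_profile m \<mu> f um 0 s U"
  obtains K where "\<And>\<xi>. \<mu> * deriv (\<lambda>x. U x powr m) \<xi> = K - s * U \<xi> + f (U \<xi>)"
proof -
  define W where "W x = U x powr m" for x
  from P have U_der: "\<And>\<xi>. (U has_real_derivative deriv U \<xi>) (at \<xi>)"
    and W'_der: "\<And>\<xi>. (deriv W has_real_derivative deriv (deriv W) \<xi>) (at \<xi>)"
    and ode: "\<And>\<xi>. - s * deriv U \<xi> + deriv (\<lambda>x. f (U x)) \<xi> = \<mu> * deriv (deriv W) \<xi>"
    unfolding dec_profile_def W_def[abs_def] by (auto simp: DERIV_deriv_iff_real_differentiable)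
  have fU_der: "((\<lambda>x. f (U x)) has_real_derivative deriv f (U \<xi>) * deriv U \<xi>) (at \<xi>)" for \<xi>
    by (rule DERIV_chain2[OF f_has_deriv U_der])
  have "((\<lambda>\<xi>. \<mu> * deriv W \<xi> + s * U \<xi> - f (U \<xi>)) has_real_derivative
      \<mu> * deriv (deriv W) \<xi> + s * deriv U \<xi> - deriv f (U \<xi>) * deriv U \<xi>) (at \<xi>)" for \<xi>
    by (intro DERIV_diff DERIV_add DERIV_cmult W'_der U_der fU_der)
  moreover have "\<mu> * deriv (deriv W) \<xi> + s * deriv U \<xi> - deriv f (U \<xi>) * deriv U \<xi> = 0" for \<xi>
    using ode[of \<xi>] DERIV_imp_deriv[OF fU_der, of \<xi>] by (simp add: algebra_simps)
  ultimately have "\<mu> * deriv W \<xi> + s * U \<xi> - f (U \<xi>) = \<mu> * deriv W 0 + s * U 0 - f (U 0)" for \<xi>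
    using DERIV_isconst_all[of "\<lambda>\<xi>. \<mu> * deriv W \<xi> + s * U \<xi> - f (U \<xi>)" \<xi> 0] by fastforce
  then show ?thesis
    by (intro that[of "\<mu> * deriv W 0 + s * U 0 - f (U 0)"]) (simp add: W_def[abs_def] algebra_simps)
qed

lemma dec_profile_first_integral:
  assumes P: "dec_profile m \<mu> f um 0 s U"
  shows "s = (f 0 - f um) / (0 - um)"
    and "\<mu> * deriv (\<lambda>x. U x powr m) \<xi> = shock_fun s (U \<xi>)"
proof -
  define W where "W x = U x powr m" for x
  obtain K where flux: "\<And>\<xi>. \<mu> * deriv W \<xi> = K - s * U \<xi> + f (U \<xi>)"
    using dec_profile_flux_constant[OF P] unfolding W_def[abs_def] by blast
  from P have "(U \<longlongrightarrow> um) at_bot" "(U \<longlongrightarrow> 0) at_top"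
    and W_der: "\<And>\<xi>. (W has_real_derivative deriv W \<xi>) (at \<xi>)"
    unfolding dec_profile_def W_def[abs_def] by (auto simp: DERIV_deriv_iff_real_differentiable)
  have "deriv W = (\<lambda>\<xi>. (K - s * U \<xi> + f (U \<xi>)) / \<mu>)"
    using flux \<mu>_pos by (auto simp: field_simps)
  then have W'_lim: "(deriv W \<longlongrightarrow> (K - s * c + f c) / \<mu>) F" if "(U \<longlongrightarrow> c) F" for c F
    using that \<mu>_pos by (auto intro!: tendsto_intros isCont_tendsto_compose[OF DERIV_isCont[OF f_has_deriv]])
  have "(W \<longlongrightarrow> um powr m) at_bot"
    unfolding W_def using um_pos by (intro tendsto_powr \<open>(U \<longlongrightarrow> um) at_bot\<close>) auto
  from DERIV_tendsto_at_bot_imp_zero[OF W_der this W'_lim[OF \<open>(U \<longlongrightarrow> um) at_bot\<close>]]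
  have K_um: "K = s * um - f um"
    using \<mu>_pos by simp
  have "(W \<longlongrightarrow> 0) at_top"
    unfolding W_def using m_pos dec_profile_bounds(1)[OF P]
    by (intro tendsto_zero_powrI \<open>(U \<longlongrightarrow> 0) at_top\<close>) auto
  from DERIV_tendsto_at_top_imp_zero[OF W_der this W'_lim[OF \<open>(U \<longlongrightarrow> 0) at_top\<close>]]
  have "K = - f 0"
    using \<mu>_pos by simp
  with K_um um_pos show "s = (f 0 - f um) / (0 - um)"
    by (simp add: field_simps)
  show "\<mu> * deriv (\<lambda>x. U x powr m) \<xi> = shock_fun s (U \<xi>)"
    using flux[of \<xi>] K_um unfolding W_def[abs_def] shock_fun_def by (simp add: algebra_simps)
qed

lemma dec_profile_has_field_deriv:
  assumes P: "dec_profile m \<mu> f um 0 s U"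
  shows "(U has_real_derivative profile_field s (U \<xi>)) (at \<xi>)"
proof -
  have U_der: "(U has_real_derivative deriv U \<xi>) (at \<xi>)"
    using P unfolding dec_profile_def by (simp add: DERIV_deriv_iff_real_differentiable)
  have "deriv U \<xi> = profile_field s (U \<xi>)"
  proof (cases "U \<xi> = 0")
    case True
    then have "\<forall>y. \<bar>\<xi> - y\<bar> < 1 \<longrightarrow> U \<xi> \<le> U y"
      using dec_profile_bounds(1)[OF P] by simp
    with True show ?thesis
      using DERIV_local_min[OF U_der, of 1] by simp
  next
    case False
    then have pos: "0 < U \<xi>"
      using dec_profile_bounds(1)[OF P, of \<xi>] by simp
    have "((\<lambda>x. U x powr m) has_real_derivative m * U \<xi> powr (m - 1) * deriv U \<xi>) (at \<xi>)"
      using DERIV_fun_powr[OF U_der pos, of m] by simp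
    then have "deriv (\<lambda>x. U x powr m) \<xi> = m * U \<xi> powr (m - 1) * deriv U \<xi>"
      by (rule DERIV_imp_deriv)
    then have "shock_fun s (U \<xi>) = \<mu> * m * deriv U \<xi> * U \<xi> powr (m - 1)"
      using dec_profile_first_integral(2)[OF P, of \<xi>] by (simp add: mult_ac)
    moreover have "U \<xi> powr (m - 1) * U \<xi> powr (1 - m) = 1"
      using pos by (simp add: powr_add[symmetric])
    ultimately show ?thesis
      using \<mu>_pos m_pos by (simp add: profile_field_def field_simps)
  qed
  with U_der show ?thesis by simp
qed

lemma dec_profile_avoids_zero_of_shock_fun:
  assumes P: "dec_profile m \<mu> f um 0 s U"
    and "shock_fun s c = 0" "0 \<le> c" "U a \<noteq> c"
  shows "U \<xi> \<noteq> c"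
proof -
  obtain L \<delta> where "0 < \<delta>" and L: "\<And>u. 0 \<le> u \<Longrightarrow> \<bar>u - c\<bar> < \<delta> \<Longrightarrow> \<bar>profile_field s u\<bar> \<le> L * \<bar>u - c\<bar>"
    using profile_field_Lipschitz_at_shock_fun_zero[OF assms(2,3)] by blast
  show ?thesis
    by (rule ode_avoids_equilibrium[OF dec_profile_has_field_deriv[OF P] _ \<open>0 < \<delta>\<close> \<open>U a \<noteq> c\<close>])
      (use L dec_profile_bounds(1)[OF P] in blast)
qed

lemma dec_profile_range:
  assumes P: "dec_profile m \<mu> f um 0 s U"
  shows "0 < U \<xi>" and "U \<xi> < um"
proof -
  from P have "(U \<longlongrightarrow> um) at_bot" "(U \<longlongrightarrow> 0) at_top"
    unfolding dec_profile_def by auto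
  obtain a where "U a \<noteq> 0"
    using tendsto_imp_eventually_ne[OF \<open>(U \<longlongrightarrow> um) at_bot\<close>, of 0] um_pos
    by (auto simp: eventually_at_bot_linorder)
  then have "U \<xi> \<noteq> 0"
    using dec_profile_avoids_zero_of_shock_fun[OF P _ order_refl]
      shock_fun_zero_if_RH[OF dec_profile_first_integral(1)[OF P]] by blast
  with dec_profile_bounds(1)[OF P, of \<xi>] show "0 < U \<xi>"
    by simp
  obtain b where "U b \<noteq> um"
    using tendsto_imp_eventually_ne[OF \<open>(U \<longlongrightarrow> 0) at_top\<close>, of um] um_pos
    by (auto simp: eventually_at_top_linorder)
  then have "U \<xi> \<noteq> um"
    by (rule dec_profile_avoids_zero_of_shock_fun[OF P shock_fun_um less_imp_le[OF um_pos]])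
  with dec_profile_bounds(2)[OF P, of \<xi>] show "U \<xi> < um"
    by simp
qed

lemma dec_profile_shock_fun_neg:
  assumes P: "dec_profile m \<mu> f um 0 s U" and u: "0 < u" "u < um"
  shows "shock_fun s u < 0"
proof -
  from P have "antimono U" "(U \<longlongrightarrow> um) at_bot" "(U \<longlongrightarrow> 0) at_top"
    unfolding dec_profile_def by auto
  obtain a where "u < U a"
    using order_tendstoD(1)[OF \<open>(U \<longlongrightarrow> um) at_bot\<close> \<open>u < um\<close>] by (auto simp: eventually_at_bot_linorder)
  obtain b where "U b < u"
    using order_tendstoD(2)[OF \<open>(U \<longlongrightarrow> 0) at_top\<close> \<open>0 < u\<close>] by (auto simp: eventually_at_top_linorder)
  have "a \<le> b"
  proof (rule ccontr)
    assume "\<not> a \<le> b"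
    then have "U a \<le> U b"
      using \<open>antimono U\<close> by (simp add: antimonoD)
    with \<open>u < U a\<close> \<open>U b < u\<close> show False by simp
  qed
  moreover have "\<forall>x. a \<le> x \<and> x \<le> b \<longrightarrow> isCont U x"
    using DERIV_isCont[OF dec_profile_has_field_deriv[OF P]] by blast
  ultimately obtain \<xi> where "U \<xi> = u"
    using IVT2[of U b u a] \<open>u < U a\<close> \<open>U b < u\<close> by auto
  have "mono (\<lambda>x. - U x)"
    using \<open>antimono U\<close> by (simp add: antimono_def mono_def)
  then have "0 \<le> - profile_field s u"
    using mono_on_imp_deriv_nonneg[of UNIV "\<lambda>x. - U x" "- profile_field s u" \<xi>]
      DERIV_minus[OF dec_profile_has_field_deriv[OF P, of \<xi>]] \<open>U \<xi> = u\<close>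
    by simp
  then have "shock_fun s u \<le> 0"
    using profile_field_nonpos_iff[OF \<open>0 < u\<close>, of s] by simp
  moreover have "shock_fun s u \<noteq> 0"
  proof
    assume "shock_fun s u = 0"
    moreover have "U b \<noteq> u" using \<open>U b < u\<close> by simp
    ultimately have "U \<xi> \<noteq> u"
      using dec_profile_avoids_zero_of_shock_fun[OF P] \<open>0 < u\<close> by simp
    with \<open>U \<xi> = u\<close> show False by simp
  qed
  ultimately show ?thesis by simp
qed

section \<open>Decay of profiles at both ends\<close>

definition decay_rate :: "real \<Rightarrow> real" where
  "decay_rate s = um powr (1 - m) / (\<mu> * m) * (deriv f um - s)"

lemma decay_rate_pos: "s < deriv f um \<Longrightarrow> 0 < decay_rate s"
  using um_pos \<mu>_pos m_pos by (simp add: decay_rate_def)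

lemma deriv_shock_fun_has_deriv: "((\<lambda>u. deriv f u - s) has_real_derivative (deriv ^^ 2) f c) (at c)"
  using higher_deriv_has_deriv[of 1 c] by (auto intro!: derivative_eq_intros simp: numeral_2_eq_2)

lemma shock_fun_eq_if_RH:
  "s = (f 0 - f um) / (0 - um) \<Longrightarrow> shock_fun s u = f u - f 0 - s * u"
proof -
  assume "s = (f 0 - f um) / (0 - um)"
  then have "s * um = f um - f 0"
    using um_pos by (simp add: field_simps)
  then show ?thesis
    unfolding shock_fun_def by (simp add: algebra_simps)
qed

lemma shock_fun_equiv_nondegenerate:
  assumes RH: "s = (f 0 - f um) / (0 - um)" and "deriv f 0 < s"
  shows "asym_equiv (\<lambda>u. - shock_fun s u) (\<lambda>u. u) (at_right 0)"
proof -
  define A where "A = s - deriv f 0"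
  have "0 < A" using \<open>deriv f 0 < s\<close> by (simp add: A_def)
  obtain K \<delta> where "0 \<le> K" "0 < \<delta>"
    and K: "\<And>u. \<bar>u - 0\<bar> < \<delta> \<Longrightarrow> \<bar>shock_fun s u - shock_fun s 0 - (deriv f 0 - s) * (u - 0)\<bar> \<le> K * (u - 0)\<^sup>2"
    using DERIV_quadratic_remainder[OF shock_fun_has_deriv deriv_shock_fun_has_deriv] by blast
  show ?thesis
  proof (rule asym_equivI)
    show "0 < A / 2" "0 < 3 * A / 2" using \<open>0 < A\<close> by auto
    show "eventually (\<lambda>u. 0 \<le> u \<and> A / 2 * u \<le> - shock_fun s u \<and> - shock_fun s u \<le> 3 * A / 2 * u) (at_right 0)"
      unfolding eventually_at_right_field
    proof (intro exI conjI allI impI)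
      show "0 < min \<delta> (A / (2 * K + 1))"
        using \<open>0 < \<delta>\<close> \<open>0 < A\<close> \<open>0 \<le> K\<close> by simp
      fix u :: real assume "0 < u" "u < min \<delta> (A / (2 * K + 1))"
      then have close: "\<bar>shock_fun s u + A * u\<bar> \<le> K * u * u"
        using K[of u] shock_fun_zero_if_RH[OF RH] by (simp add: A_def power2_eq_square algebra_simps)
      have "K * u \<le> A / 2"
      proof -
        have "(2 * K + 1) * u \<le> A"
          using \<open>u < min \<delta> (A / (2 * K + 1))\<close> \<open>0 \<le> K\<close> by (simp add: pos_less_divide_eq mult.commute)
        then show ?thesis using \<open>0 < u\<close> by (simp add: algebra_simps)
      qed
      then have "K * u * u \<le> A / 2 * u"
        using \<open>0 < u\<close> by (intro mult_right_mono) auto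
      moreover have "A * u = A / 2 * u + A / 2 * u" "3 * A / 2 * u = A * u + A / 2 * u"
        by (simp_all add: algebra_simps)
      ultimately show "0 \<le> u" "A / 2 * u \<le> - shock_fun s u" "- shock_fun s u \<le> 3 * A / 2 * u"
        using \<open>0 < u\<close> abs_le_iff[THEN iffD1, OF close] by linarith+
    qed
  qed
qed

lemma shock_fun_Maclaurin:
  assumes RH: "s = (f 0 - f um) / (0 - um)" and "1 \<le> k" and "deriv f 0 = s"
    and vanish: "\<forall>j\<in>{2..k}. (deriv ^^ j) f 0 = 0" and "0 < u"
  shows "\<exists>t. 0 < t \<and> t < u \<and> shock_fun s u = (deriv ^^ (k + 1)) f t / fact (k + 1) * u ^ (k + 1)"
proof -
  obtain t where t: "0 < t" "t < u"
    "f u = (\<Sum>j<k + 1. (deriv ^^ j) f 0 / fact j * u ^ j) + (deriv ^^ (k + 1)) f t / fact (k + 1) * u ^ (k + 1)"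
    using Maclaurin[OF \<open>0 < u\<close>, of "k + 1" "\<lambda>j. (deriv ^^ j) f" f] higher_deriv_has_deriv by auto
  have "(\<Sum>j<k + 1. (deriv ^^ j) f 0 / fact j * u ^ j) = (\<Sum>j<2. (deriv ^^ j) f 0 / fact j * u ^ j)"
    using \<open>1 \<le> k\<close> vanish by (intro sum.mono_neutral_right) auto
  also have "\<dots> = f 0 + s * u"
    using \<open>deriv f 0 = s\<close> by (simp add: numeral_2_eq_2)
  finally show ?thesis
    using t shock_fun_eq_if_RH[OF RH] by (intro exI[of _ t]) simp
qed

lemma shock_fun_Maclaurin_near_zero:
  assumes RH: "s = (f 0 - f um) / (0 - um)" and "1 \<le> k" and "deriv f 0 = s"
    and vanish: "\<forall>j\<in>{2..k}. (deriv ^^ j) f 0 = 0" and nonzero: "(deriv ^^ (k + 1)) f 0 \<noteq> 0"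
  obtains \<delta> where "0 < \<delta>"
    and "\<And>u. 0 < u \<Longrightarrow> u < \<delta> \<Longrightarrow> \<exists>t. \<bar>(deriv ^^ (k + 1)) f t - (deriv ^^ (k + 1)) f 0\<bar> < \<bar>(deriv ^^ (k + 1)) f 0\<bar> / 2
      \<and> shock_fun s u = (deriv ^^ (k + 1)) f t / fact (k + 1) * u ^ (k + 1)"
proof -
  let ?A = "(deriv ^^ (k + 1)) f 0"
  have "isCont ((deriv ^^ (k + 1)) f) 0"
    by (rule DERIV_isCont[OF higher_deriv_has_deriv])
  moreover have "0 < \<bar>?A\<bar> / 2"
    using nonzero by simp
  ultimately obtain \<delta> where "0 < \<delta>" and \<delta>: "\<And>t. dist t 0 < \<delta> \<Longrightarrow> dist ((deriv ^^ (k + 1)) f t) ?A < \<bar>?A\<bar> / 2"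
    unfolding continuous_at_eps_delta by blast
  have "\<exists>t. \<bar>(deriv ^^ (k + 1)) f t - ?A\<bar> < \<bar>?A\<bar> / 2
      \<and> shock_fun s u = (deriv ^^ (k + 1)) f t / fact (k + 1) * u ^ (k + 1)" if "0 < u" "u < \<delta>" for u
  proof -
    obtain t where "0 < t" "t < u" "shock_fun s u = (deriv ^^ (k + 1)) f t / fact (k + 1) * u ^ (k + 1)"
      using shock_fun_Maclaurin[OF RH \<open>1 \<le> k\<close> \<open>deriv f 0 = s\<close> vanish \<open>0 < u\<close>] by blast
    moreover have "dist ((deriv ^^ (k + 1)) f t) ?A < \<bar>?A\<bar> / 2"
      using \<delta>[of t] \<open>0 < t\<close> \<open>t < u\<close> \<open>u < \<delta>\<close> by (simp add: dist_real_def)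
    ultimately show ?thesis
      by (auto simp only: dist_real_def)
  qed
  with \<open>0 < \<delta>\<close> show ?thesis
    using that by blast
qed

lemma profile_field_equiv_at_zero:
  assumes "asym_equiv (\<lambda>u. - shock_fun s u) (\<lambda>u. u ^ p) (at_right 0)"
  shows "asym_equiv (\<lambda>u. - profile_field s u) (\<lambda>u. u powr (real p + 1 - m)) (at_right 0)"
proof -
  obtain c1 c2 where "0 < c1" "0 < c2"
    and c: "eventually (\<lambda>u. c1 * u ^ p \<le> - shock_fun s u \<and> - shock_fun s u \<le> c2 * u ^ p) (at_right 0)"
    using assms by (rule asym_equivE)
  show ?thesis
  proof (rule asym_equivI)
    show "0 < c1 / (\<mu> * m)" "0 < c2 / (\<mu> * m)"
      using \<open>0 < c1\<close> \<open>0 < c2\<close> \<mu>_pos m_pos by auto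
    show "eventually (\<lambda>u. 0 \<le> u powr (real p + 1 - m)
        \<and> c1 / (\<mu> * m) * u powr (real p + 1 - m) \<le> - profile_field s u
        \<and> - profile_field s u \<le> c2 / (\<mu> * m) * u powr (real p + 1 - m)) (at_right 0)"
      using c eventually_at_right_less[of 0]
    proof eventually_elim
      case (elim u)
      then have w: "0 < u powr (1 - m) / (\<mu> * m)"
        using \<mu>_pos m_pos by simp
      have "u powr (real p + 1 - m) = u powr real p * u powr (1 - m)"
        by (simp add: powr_add[symmetric] add_diff_eq)
      then have split: "c / (\<mu> * m) * u powr (real p + 1 - m) = c * u ^ p * (u powr (1 - m) / (\<mu> * m))" for c
        using elim by (simp add: powr_realpow)
      have neg_h: "- profile_field s u = - shock_fun s u * (u powr (1 - m) / (\<mu> * m))"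
        by (simp add: profile_field_def)
      have "c1 * u ^ p * (u powr (1 - m) / (\<mu> * m)) \<le> - shock_fun s u * (u powr (1 - m) / (\<mu> * m))"
        using elim w by (intro mult_right_mono) simp_all
      moreover have "- shock_fun s u * (u powr (1 - m) / (\<mu> * m)) \<le> c2 * u ^ p * (u powr (1 - m) / (\<mu> * m))"
        using elim w by (intro mult_right_mono) simp_all
      ultimately show ?case
        unfolding split neg_h by simp
    qed
  qed
qed

lemma dec_profile_decay_at_top:
  assumes P: "dec_profile m \<mu> f um 0 s U" and "1 \<le> p"
    and equiv: "asym_equiv (\<lambda>u. - shock_fun s u) (\<lambda>u. u ^ p) (at_right 0)"
  shows "asym_equiv (\<lambda>\<xi>. \<bar>deriv U \<xi>\<bar> powr (1 / (real p + 1 - m))) U at_top"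
    and "asym_equiv U (\<lambda>\<xi>. \<bar>\<xi>\<bar> powr (- 1 / (real p - m))) at_top"
proof -
  have "(U \<longlongrightarrow> 0) at_top"
    using P unfolding dec_profile_def by auto
  then have "filterlim U (at_right 0) at_top"
    using dec_profile_range(1)[OF P] by (intro tendsto_imp_filterlim_at_right) auto
  from asym_equiv_compose[OF profile_field_equiv_at_zero[OF equiv] this]
  have U_equiv: "asym_equiv (\<lambda>\<xi>. - profile_field s (U \<xi>)) (\<lambda>\<xi>. U \<xi> powr (real p + 1 - m)) at_top" .
  have q: "0 < real p + 1 - m" "1 < real p + 1 - m" "real p + 1 - m - 1 = real p - m"
    using \<open>1 \<le> p\<close> m_less_1 by auto
  have "deriv U = (\<lambda>\<xi>. profile_field s (U \<xi>))"
    using DERIV_imp_deriv[OF dec_profile_has_field_deriv[OF P]] by blast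
  with power_ode_deriv_asym_equiv[OF dec_profile_range(1)[OF P] q(1) U_equiv]
  show "asym_equiv (\<lambda>\<xi>. \<bar>deriv U \<xi>\<bar> powr (1 / (real p + 1 - m))) U at_top"
    by simp
  from power_ode_decay_at_top[OF dec_profile_has_field_deriv[OF P] dec_profile_range(1)[OF P] q(2) U_equiv]
  show "asym_equiv U (\<lambda>\<xi>. \<bar>\<xi>\<bar> powr (- 1 / (real p - m))) at_top"
    unfolding q(3) .
qed

lemma profile_field_linearization_at_um:
  "\<exists>K \<delta>. 0 < \<delta> \<and> (\<forall>u. \<bar>u - um\<bar> < \<delta> \<longrightarrow> \<bar>profile_field s u + decay_rate s * (um - u)\<bar> \<le> K * (u - um)\<^sup>2)"
proof -
  define A where "A = deriv f um - s"
  define w where "w u = u powr (1 - m)" for u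
  obtain K \<delta> where "0 \<le> K" "0 < \<delta>"
    and K: "\<And>u. \<bar>u - um\<bar> < \<delta> \<Longrightarrow> \<bar>shock_fun s u - A * (u - um)\<bar> \<le> K * (u - um)\<^sup>2"
    using DERIV_quadratic_remainder[OF shock_fun_has_deriv[of s] deriv_shock_fun_has_deriv[of s um]]
    by (auto simp: A_def)
  have "(w has_real_derivative (1 - m) * um powr (1 - m - 1) * 1) (at um)"
    unfolding w_def[abs_def] using DERIV_fun_powr[OF DERIV_ident um_pos, of "1 - m"] by simp
  then obtain L \<delta>' where "0 \<le> L" "0 < \<delta>'"
    and L: "\<And>u. \<bar>u - um\<bar> < \<delta>' \<Longrightarrow> \<bar>w u - w um\<bar> \<le> L * \<bar>u - um\<bar>"
    using DERIV_imp_local_Lipschitz by blast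
  define C where "C = (K * (w um + L * \<delta>') + \<bar>A\<bar> * L) / (\<mu> * m)"
  have "\<bar>profile_field s u + decay_rate s * (um - u)\<bar> \<le> C * (u - um)\<^sup>2"
    if u: "\<bar>u - um\<bar> < min \<delta> \<delta>'" for u
  proof -
    have "\<bar>w u\<bar> \<le> w um + L * \<delta>'"
      using L[of u] u \<open>0 \<le> L\<close> mult_left_mono[of "\<bar>u - um\<bar>" \<delta>' L] by (simp add: w_def)
    then have E1: "\<bar>(shock_fun s u - A * (u - um)) * w u\<bar> \<le> K * (u - um)\<^sup>2 * (w um + L * \<delta>')"
      using K[of u] u by (auto simp: abs_mult intro: mult_mono)
    have E2: "\<bar>A * (u - um) * (w u - w um)\<bar> \<le> \<bar>A\<bar> * L * (u - um)\<^sup>2"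
      using L[of u] u mult_left_mono[of "\<bar>w u - w um\<bar>" "L * \<bar>u - um\<bar>" "\<bar>A\<bar> * \<bar>u - um\<bar>"]
      by (simp add: abs_mult power2_eq_square mult_ac)
    have "(profile_field s u + decay_rate s * (um - u)) * (\<mu> * m)
        = (shock_fun s u - A * (u - um)) * w u + A * (u - um) * (w u - w um)"
      using \<mu>_pos m_pos by (simp add: profile_field_def decay_rate_def A_def w_def field_simps)
    moreover have "\<bar>(profile_field s u + decay_rate s * (um - u)) * (\<mu> * m)\<bar>
        = \<bar>profile_field s u + decay_rate s * (um - u)\<bar> * (\<mu> * m)"
      using \<mu>_pos m_pos by (simp add: abs_mult)
    ultimately have "\<bar>profile_field s u + decay_rate s * (um - u)\<bar>
        = \<bar>(shock_fun s u - A * (u - um)) * w u + A * (u - um) * (w u - w um)\<bar> / (\<mu> * m)"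
      using \<mu>_pos m_pos by (simp add: eq_divide_eq)
    also have "\<dots> \<le> (\<bar>(shock_fun s u - A * (u - um)) * w u\<bar> + \<bar>A * (u - um) * (w u - w um)\<bar>) / (\<mu> * m)"
      using \<mu>_pos m_pos by (intro divide_right_mono abs_triangle_ineq) simp
    also have "\<dots> \<le> (K * (u - um)\<^sup>2 * (w um + L * \<delta>') + \<bar>A\<bar> * L * (u - um)\<^sup>2) / (\<mu> * m)"
      using \<mu>_pos m_pos E1 E2 by (intro divide_right_mono add_mono) simp_all
    also have "\<dots> = C * (u - um)\<^sup>2"
      by (simp add: C_def algebra_simps add_divide_distrib)
    finally show ?thesis .
  qed
  moreover have "0 < min \<delta> \<delta>'" using \<open>0 < \<delta>\<close> \<open>0 < \<delta>'\<close> by simp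
  ultimately show ?thesis by blast
qed

lemma dec_profile_decay_at_bot:
  assumes P: "dec_profile m \<mu> f um 0 s U" and "s < deriv f um"
  shows "asym_equiv (\<lambda>\<xi>. \<bar>deriv U \<xi>\<bar>) (\<lambda>\<xi>. \<bar>U \<xi> - um\<bar>) at_bot"
    and "asym_equiv (\<lambda>\<xi>. \<bar>U \<xi> - um\<bar>) (\<lambda>\<xi>. exp (- decay_rate s * \<bar>\<xi>\<bar>)) at_bot"
proof -
  define V where "V \<xi> = um - U \<xi>" for \<xi>
  have V_der: "(V has_real_derivative - profile_field s (U \<xi>)) (at \<xi>)" for \<xi>
    unfolding V_def[abs_def] by (auto intro!: derivative_eq_intros dec_profile_has_field_deriv[OF P])
  have V_pos: "0 < V \<xi>" for \<xi>
    using dec_profile_range(2)[OF P] by (simp add: V_def)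
  have "(U \<longlongrightarrow> um) at_bot"
    using P unfolding dec_profile_def by auto
  then have V_lim: "(V \<longlongrightarrow> 0) at_bot"
    unfolding V_def[abs_def] using tendsto_diff[OF tendsto_const, of U um at_bot um] by simp
  obtain K \<delta> where "0 < \<delta>"
    and K: "\<And>u. \<bar>u - um\<bar> < \<delta> \<Longrightarrow> \<bar>profile_field s u + decay_rate s * (um - u)\<bar> \<le> K * (u - um)\<^sup>2"
    using profile_field_linearization_at_um by blast
  have "eventually (\<lambda>\<xi>. \<bar>V \<xi>\<bar> < \<delta>) at_bot"
    using tendstoD[OF V_lim \<open>0 < \<delta>\<close>] by (simp add: dist_real_def)
  then have "eventually (\<lambda>\<xi>. \<bar>- profile_field s (U \<xi>) - decay_rate s * V \<xi>\<bar> \<le> K * (V \<xi>)\<^sup>2) at_bot"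
  proof eventually_elim
    case (elim \<xi>)
    then show ?case
      using K[of "U \<xi>"] by (simp add: V_def abs_minus_commute power2_commute algebra_simps)
  qed
  note decay = linear_ode_deriv_asym_equiv_at_bot[OF V_pos V_lim decay_rate_pos[OF \<open>s < deriv f um\<close>] this]
    linear_ode_decay_at_bot[OF V_der V_pos V_lim decay_rate_pos[OF \<open>s < deriv f um\<close>] this]
  have "deriv U = (\<lambda>\<xi>. profile_field s (U \<xi>))"
    using DERIV_imp_deriv[OF dec_profile_has_field_deriv[OF P]] by blast
  moreover have "V = (\<lambda>\<xi>. \<bar>U \<xi> - um\<bar>)"
  proof
    fix \<xi>
    show "V \<xi> = \<bar>U \<xi> - um\<bar>"
      using dec_profile_range(2)[OF P, of \<xi>] by (simp add: V_def)
  qed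
  ultimately show "asym_equiv (\<lambda>\<xi>. \<bar>deriv U \<xi>\<bar>) (\<lambda>\<xi>. \<bar>U \<xi> - um\<bar>) at_bot"
    and "asym_equiv (\<lambda>\<xi>. \<bar>U \<xi> - um\<bar>) (\<lambda>\<xi>. exp (- decay_rate s * \<bar>\<xi>\<bar>)) at_bot"
    using decay by simp_all
qed

lemma dec_profile_decay:
  assumes P: "dec_profile m \<mu> f um 0 s U" and "s < deriv f um" and "1 \<le> p"
    and equiv: "asym_equiv (\<lambda>u. - shock_fun s u) (\<lambda>u. u ^ p) (at_right 0)"
  shows "0 < decay_rate s
    \<and> asym_equiv (\<lambda>\<xi>. \<bar>deriv U \<xi>\<bar> powr (1 / (real p + 1 - m))) (\<lambda>\<xi>. \<bar>U \<xi>\<bar>) at_top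
    \<and> asym_equiv (\<lambda>\<xi>. \<bar>U \<xi>\<bar>) (\<lambda>\<xi>. \<bar>\<xi>\<bar> powr (- 1 / (real p - m))) at_top
    \<and> asym_equiv (\<lambda>\<xi>. \<bar>deriv U \<xi>\<bar>) (\<lambda>\<xi>. \<bar>U \<xi> - um\<bar>) at_bot
    \<and> asym_equiv (\<lambda>\<xi>. \<bar>U \<xi> - um\<bar>) (\<lambda>\<xi>. exp (- decay_rate s * \<bar>\<xi>\<bar>)) at_bot"
proof -
  have "(\<lambda>\<xi>. \<bar>U \<xi>\<bar>) = U"
    using dec_profile_range(1)[OF P] by (simp add: less_imp_le)
  then show ?thesis
    using decay_rate_pos[OF \<open>s < deriv f um\<close>] dec_profile_decay_at_top[OF P \<open>1 \<le> p\<close> equiv]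
      dec_profile_decay_at_bot[OF P \<open>s < deriv f um\<close>]
    by simp
qed

end

section \<open>Existence and uniqueness of profiles\<close>

locale admissible_shock = porous_shock +
  fixes s :: real
  assumes rankine_hugoniot: "s = (f 0 - f um) / (0 - um)"
    and shock_fun_neg: "\<And>u. 0 < u \<Longrightarrow> u < um \<Longrightarrow> shock_fun s u < 0"
begin

lemma profile_field_neg: "0 < u \<Longrightarrow> u < um \<Longrightarrow> profile_field s u < 0"
  using profile_field_neg_iff shock_fun_neg by blast

lemma isCont_profile_field: "0 < u \<Longrightarrow> isCont (profile_field s) u"
  unfolding profile_field_def[abs_def]
  by (intro continuous_intros DERIV_isCont[OF shock_fun_has_deriv]) (use m_pos \<mu>_pos in auto)

lemma reciprocal_profile_field_bound:
  assumes "shock_fun s c = 0" "0 \<le> c"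
  shows "\<exists>L \<delta>. 0 < L \<and> 0 < \<delta> \<and>
    (\<forall>u. 0 < u \<longrightarrow> u < um \<longrightarrow> \<bar>u - c\<bar> < \<delta> \<longrightarrow> 1 / profile_field s u \<le> - 1 / (L * \<bar>u - c\<bar>))"
proof -
  obtain L \<delta> where "0 < \<delta>" and L: "\<And>u. 0 \<le> u \<Longrightarrow> \<bar>u - c\<bar> < \<delta> \<Longrightarrow> \<bar>profile_field s u\<bar> \<le> L * \<bar>u - c\<bar>"
    using profile_field_Lipschitz_at_shock_fun_zero[OF assms] by blast
  have "1 / profile_field s u \<le> - 1 / (max L 1 * \<bar>u - c\<bar>)" if "0 < u" "u < um" "\<bar>u - c\<bar> < \<delta>" for u
  proof -
    have neg: "profile_field s u < 0"
      using profile_field_neg that by blast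
    have "- profile_field s u \<le> L * \<bar>u - c\<bar>"
      using L[of u] that by simp
    also have "\<dots> \<le> max L 1 * \<bar>u - c\<bar>"
      by (intro mult_right_mono) auto
    finally have bound: "- profile_field s u \<le> max L 1 * \<bar>u - c\<bar>" .
    moreover have "0 < max L 1 * \<bar>u - c\<bar>"
      using neg bound by linarith
    ultimately have "1 / (max L 1 * \<bar>u - c\<bar>) \<le> 1 / (- profile_field s u)"
      using neg by (intro divide_left_mono) (simp_all add: mult_pos_neg)
    then show ?thesis
      by simp
  qed
  with \<open>0 < \<delta>\<close> show ?thesis
    by (intro exI[of _ "max L 1"] exI[of _ \<delta>]) auto
qed

text \<open>Separation of variables in \<open>U' = h(U)\<close>: a profile is the inverse of \<open>\<Phi>\<close>,
  up to a shift; this normalisation of \<open>\<Phi>\<close> corresponds to \<open>U(0) = um / 2\<close>.\<close>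
definition profile_time :: "real \<Rightarrow> real" where
  "profile_time u = (LBINT y=um/2..u. 1 / profile_field s y)"

lemma profile_time_has_deriv:
  assumes "0 < u" "u < um"
  shows "(profile_time has_real_derivative 1 / profile_field s u) (at u)"
proof -
  define a where "a = min (u / 2) (um / 2)"
  define b where "b = max ((u + um) / 2) (um / 2)"
  have ab: "0 < a" "a < u" "u < b" "b < um" "a \<le> um / 2" "um / 2 \<le> b"
    using assms um_pos unfolding a_def b_def by auto
  have "continuous_on {a..b} (\<lambda>y. 1 / profile_field s y)"
  proof (intro continuous_at_imp_continuous_on ballI)
    fix y assume "y \<in> {a..b}"
    then have "0 < y" "y < um" using ab by auto
    then show "isCont (\<lambda>y. 1 / profile_field s y) y"
      using profile_field_neg by (intro continuous_intros isCont_profile_field) (auto simp: order_less_imp_not_eq)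
  qed
  from interval_integral_FTC2[OF ab(5,6) this, of u]
  have "(profile_time has_vector_derivative 1 / profile_field s u) (at u within {a..b})"
    using ab unfolding profile_time_def[abs_def] by simp
  moreover have "at u within {a..b} = at u"
    using ab by (intro at_within_interior) simp
  ultimately show ?thesis
    by (simp add: has_real_derivative_iff_has_vector_derivative)
qed

lemma profile_time_strict_decreasing:
  assumes "0 < x" "x < y" "y < um"
  shows "profile_time y < profile_time x"
proof (rule DERIV_neg_imp_decreasing[OF \<open>x < y\<close>])
  fix t assume "x \<le> t" "t \<le> y"
  with assms have "0 < t" "t < um" by auto
  then show "\<exists>d. (profile_time has_real_derivative d) (at t) \<and> d < 0"
    using profile_time_has_deriv profile_field_neg by force
qed

lemma profile_time_inj:
  "0 < x \<Longrightarrow> x < um \<Longrightarrow> 0 < y \<Longrightarrow> y < um \<Longrightarrow> profile_time x = profile_time y \<Longrightarrow> x = y"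
  using profile_time_strict_decreasing[of x y] profile_time_strict_decreasing[of y x]
  by (cases x y rule: linorder_cases) auto

lemma profile_time_unbounded_above: "\<exists>u. 0 < u \<and> u < um \<and> M < profile_time u"
proof -
  obtain L \<delta> where "0 < L" "0 < \<delta>"
    and L: "\<And>u. 0 < u \<Longrightarrow> u < um \<Longrightarrow> \<bar>u\<bar> < \<delta> \<Longrightarrow> 1 / profile_field s u \<le> - 1 / (L * \<bar>u\<bar>)"
    using reciprocal_profile_field_bound[OF shock_fun_zero_if_RH[OF rankine_hugoniot]] by auto
  define d where "d = min (\<delta> / 2) (um / 2)"
  define x where "x = d * exp (- L * (\<bar>M - profile_time d\<bar> + 1))"
  have "0 < d" "d < \<delta>" "d < um"
    using \<open>0 < \<delta>\<close> um_pos by (auto simp: d_def)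
  have "0 < x" "x \<le> d"
    using \<open>0 < d\<close> \<open>0 < L\<close> by (auto simp: x_def mult_le_cancel_left1)
  have "profile_time d - profile_time x \<le> (\<lambda>t. - ln t / L) d - (\<lambda>t. - ln t / L) x"
  proof (rule DERIV_le_imp_diff_le[OF \<open>x \<le> d\<close>])
    fix t assume "x \<le> t" "t \<le> d"
    with \<open>0 < x\<close> \<open>d < \<delta>\<close> \<open>d < um\<close> have t: "0 < t" "t < um" "\<bar>t\<bar> < \<delta>" by auto
    show "(profile_time has_real_derivative 1 / profile_field s t) (at t)"
      using profile_time_has_deriv t by auto
    show "((\<lambda>t. - ln t / L) has_real_derivative - 1 / (L * t)) (at t)"
      using t \<open>0 < L\<close> by (auto intro!: derivative_eq_intros simp: field_simps)
    show "1 / profile_field s t \<le> - 1 / (L * t)"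
      using L[OF t] t by simp
  qed
  moreover have "- ln d / L - - ln x / L = (ln x - ln d) / L"
    by (simp add: diff_divide_distrib)
  moreover have "ln x - ln d = - L * (\<bar>M - profile_time d\<bar> + 1)"
    using \<open>0 < d\<close> by (simp add: x_def ln_mult)
  then have "(ln x - ln d) / L = - (\<bar>M - profile_time d\<bar> + 1)"
    using \<open>0 < L\<close> by simp
  ultimately have "M < profile_time x"
    using abs_ge_self[of "M - profile_time d"] by linarith
  with \<open>0 < x\<close> \<open>x \<le> d\<close> \<open>d < um\<close> show ?thesis by auto
qed

lemma profile_time_unbounded_below: "\<exists>u. 0 < u \<and> u < um \<and> profile_time u < M"
proof -
  obtain L \<delta> where "0 < L" "0 < \<delta>"
    and L: "\<And>u. 0 < u \<Longrightarrow> u < um \<Longrightarrow> \<bar>u - um\<bar> < \<delta> \<Longrightarrow> 1 / profile_field s u \<le> - 1 / (L * \<bar>u - um\<bar>)"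
    using reciprocal_profile_field_bound[OF shock_fun_um] um_pos by auto
  define d where "d = min (\<delta> / 2) (um / 2)"
  define e where "e = d * exp (- L * (\<bar>M - profile_time (um - d)\<bar> + 1))"
  have "0 < d" "d < \<delta>" "d < um"
    using \<open>0 < \<delta>\<close> um_pos by (auto simp: d_def)
  have "0 < e" "e \<le> d"
    using \<open>0 < d\<close> \<open>0 < L\<close> by (auto simp: e_def mult_le_cancel_left1)
  have "profile_time (um - e) - profile_time (um - d)
      \<le> (\<lambda>t. ln (um - t) / L) (um - e) - (\<lambda>t. ln (um - t) / L) (um - d)"
  proof (rule DERIV_le_imp_diff_le)
    show "um - d \<le> um - e" using \<open>e \<le> d\<close> by simp
    fix t assume "um - d \<le> t" "t \<le> um - e"
    with \<open>0 < e\<close> \<open>d < \<delta>\<close> \<open>d < um\<close> have t: "0 < t" "t < um" "\<bar>t - um\<bar> < \<delta>" by auto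
    show "(profile_time has_real_derivative 1 / profile_field s t) (at t)"
      using profile_time_has_deriv t by auto
    show "((\<lambda>t. ln (um - t) / L) has_real_derivative - 1 / (L * (um - t))) (at t)"
      using t \<open>0 < L\<close> by (auto intro!: derivative_eq_intros simp: field_simps)
    show "1 / profile_field s t \<le> - 1 / (L * (um - t))"
      using L[OF t] t by simp
  qed
  moreover have "ln (um - (um - e)) / L - ln (um - (um - d)) / L = (ln e - ln d) / L"
    by (simp add: diff_divide_distrib)
  moreover have "ln e - ln d = - L * (\<bar>M - profile_time (um - d)\<bar> + 1)"
    using \<open>0 < d\<close> by (simp add: e_def ln_mult)
  then have "(ln e - ln d) / L = - (\<bar>M - profile_time (um - d)\<bar> + 1)"
    using \<open>0 < L\<close> by simp
  ultimately have "profile_time (um - e) < M"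
    using abs_ge_self[of "M - profile_time (um - d)"] by linarith
  with \<open>0 < e\<close> \<open>e \<le> d\<close> \<open>d < um\<close> show ?thesis
    by (intro exI[of _ "um - e"]) auto
qed

lemma profile_time_surj: "\<exists>u. 0 < u \<and> u < um \<and> profile_time u = \<xi>"
proof -
  obtain u1 where u1: "0 < u1" "u1 < um" "\<xi> < profile_time u1"
    using profile_time_unbounded_above by blast
  obtain u2 where u2: "0 < u2" "u2 < um" "profile_time u2 < \<xi>"
    using profile_time_unbounded_below by blast
  have "u1 < u2"
    using u1 u2 profile_time_strict_decreasing[of u2 u1] by (cases u1 u2 rule: linorder_cases) auto
  moreover have "\<forall>x. u1 \<le> x \<and> x \<le> u2 \<longrightarrow> isCont profile_time x"
    using u1 u2 by (auto intro!: DERIV_isCont profile_time_has_deriv)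
  ultimately obtain u where "u1 \<le> u" "u \<le> u2" "profile_time u = \<xi>"
    using IVT2[of profile_time u2 \<xi> u1] u1 u2 by auto
  with u1 u2 show ?thesis
    by (intro exI[of _ u]) auto
qed

definition canonical_profile :: "real \<Rightarrow> real" where
  "canonical_profile \<xi> = (THE u. 0 < u \<and> u < um \<and> profile_time u = \<xi>)"

lemma canonical_profile_spec:
  "0 < canonical_profile \<xi> \<and> canonical_profile \<xi> < um \<and> profile_time (canonical_profile \<xi>) = \<xi>"
proof -
  have "\<exists>!u. 0 < u \<and> u < um \<and> profile_time u = \<xi>"
    using profile_time_surj profile_time_inj by blast
  then show ?thesis
    unfolding canonical_profile_def by (rule theI')
qed

lemma canonical_profile_bounds: "0 < canonical_profile \<xi>" "canonical_profile \<xi> < um"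
  using canonical_profile_spec by auto

lemma profile_time_canonical_profile: "profile_time (canonical_profile \<xi>) = \<xi>"
  using canonical_profile_spec by auto

lemma canonical_profile_profile_time: "0 < u \<Longrightarrow> u < um \<Longrightarrow> canonical_profile (profile_time u) = u"
  using profile_time_inj[of "canonical_profile (profile_time u)" u]
    canonical_profile_bounds[of "profile_time u"] profile_time_canonical_profile[of "profile_time u"]
  by simp

lemma canonical_profile_has_field_deriv:
  "(canonical_profile has_real_derivative profile_field s (canonical_profile \<xi>)) (at \<xi>)"
proof -
  define u where "u = canonical_profile \<xi>"
  have u: "0 < u" "u < um"
    using canonical_profile_bounds unfolding u_def by auto
  define d where "d = min (u / 2) ((um - u) / 2)"
  have "0 < d" using u by (simp add: d_def)
  have near: "0 < z \<and> z < um" if "\<bar>z - u\<bar> \<le> d" for z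
  proof -
    have "2 * d \<le> u" "2 * d \<le> um - u"
      by (simp_all add: d_def min_def)
    moreover have "z - u \<le> d" "u - z \<le> d"
      using that by (simp_all add: abs_le_iff)
    ultimately show ?thesis
      using u by (intro conjI) linarith+
  qed
  have "isCont canonical_profile (profile_time u)"
  proof (rule isCont_inverse_function[OF \<open>0 < d\<close>, where f = profile_time and x = u])
    fix z assume "\<bar>z - u\<bar> \<le> d"
    with near have z: "0 < z" "z < um" by auto
    show "canonical_profile (profile_time z) = z"
      using canonical_profile_profile_time[OF z] .
    show "isCont profile_time z"
      using DERIV_isCont[OF profile_time_has_deriv[OF z]] .
  qed
  then have cont: "isCont canonical_profile \<xi>"
    using profile_time_canonical_profile[of \<xi>] by (simp add: u_def)
  have "(canonical_profile has_real_derivative inverse (1 / profile_field s u)) (at \<xi>)"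
  proof (rule DERIV_inverse_function[where a = "\<xi> - 1" and b = "\<xi> + 1"])
    show "(profile_time has_real_derivative 1 / profile_field s u) (at (canonical_profile \<xi>))"
      using profile_time_has_deriv[OF u] unfolding u_def .
    show "1 / profile_field s u \<noteq> 0"
      using profile_field_neg[OF u] by simp
  qed (use cont profile_time_canonical_profile in auto)
  then show ?thesis
    unfolding u_def by simp
qed

lemma canonical_profile_strict_decreasing:
  assumes "x < y"
  shows "canonical_profile y < canonical_profile x"
proof (rule ccontr)
  assume "\<not> canonical_profile y < canonical_profile x"
  then consider "canonical_profile x = canonical_profile y" | "canonical_profile x < canonical_profile y"
    by linarith
  then show False
  proof cases
    case 1
    then have "profile_time (canonical_profile x) = profile_time (canonical_profile y)"
      by simp
    with \<open>x < y\<close> show False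
      by (simp add: profile_time_canonical_profile)
  next
    case 2
    then have "profile_time (canonical_profile y) < profile_time (canonical_profile x)"
      using canonical_profile_bounds by (intro profile_time_strict_decreasing) auto
    with \<open>x < y\<close> show False
      by (simp add: profile_time_canonical_profile)
  qed
qed

lemma canonical_profile_tendsto_at_bot: "(canonical_profile \<longlongrightarrow> um) at_bot"
proof (rule order_tendstoI)
  fix a assume "a < um"
  show "eventually (\<lambda>x. a < canonical_profile x) at_bot"
  proof (cases "0 < a")
    case True
    show ?thesis
    proof (rule eventually_mono[OF eventually_gt_at_bot[of "profile_time a"]])
      fix x assume "x < profile_time a"
      then have "canonical_profile (profile_time a) < canonical_profile x"
        by (rule canonical_profile_strict_decreasing)
      with True \<open>a < um\<close> show "a < canonical_profile x"
        by (simp add: canonical_profile_profile_time)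
    qed
  next
    case False
    then have "a < canonical_profile x" for x
      using canonical_profile_bounds(1)[of x] by linarith
    then show ?thesis
      by (intro always_eventually allI)
  qed
qed (use canonical_profile_bounds(2) in \<open>auto intro: always_eventually order_less_trans\<close>)

lemma canonical_profile_tendsto_at_top: "(canonical_profile \<longlongrightarrow> 0) at_top"
proof (rule order_tendstoI)
  fix a :: real assume "0 < a"
  show "eventually (\<lambda>x. canonical_profile x < a) at_top"
  proof (cases "a < um")
    case True
    show ?thesis
    proof (rule eventually_mono[OF eventually_gt_at_top[of "profile_time a"]])
      fix x assume "profile_time a < x"
      then have "canonical_profile x < canonical_profile (profile_time a)"
        by (rule canonical_profile_strict_decreasing)
      with True \<open>0 < a\<close> show "canonical_profile x < a"
        by (simp add: canonical_profile_profile_time)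
    qed
  next
    case False
    then have "canonical_profile x < a" for x
      using canonical_profile_bounds(2)[of x] by linarith
    then show ?thesis
      by (intro always_eventually allI)
  qed
qed (use canonical_profile_bounds(1) in \<open>auto intro: always_eventually order_less_trans\<close>)

lemma dec_profile_canonical_profile: "dec_profile m \<mu> f um 0 s canonical_profile"
proof -
  let ?U = canonical_profile
  have U_der: "(?U has_real_derivative profile_field s (?U x)) (at x)" for x
    by (rule canonical_profile_has_field_deriv)
  have W_der: "((\<lambda>x. ?U x powr m) has_real_derivative shock_fun s (?U x) / \<mu>) (at x)" for x
  proof -
    have "((\<lambda>x. ?U x powr m) has_real_derivative m * ?U x powr (m - 1) * profile_field s (?U x)) (at x)"
      using DERIV_fun_powr[OF U_der canonical_profile_bounds(1), of m] by simp
    moreover have "?U x powr (m - 1) * ?U x powr (1 - m) = 1"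
      using canonical_profile_bounds(1)[of x] by (simp add: powr_add[symmetric])
    then have "m * ?U x powr (m - 1) * profile_field s (?U x) = shock_fun s (?U x) / \<mu>"
      using m_pos \<mu>_pos by (simp add: profile_field_def field_simps)
    ultimately show ?thesis by simp
  qed
  then have W_deriv: "deriv (\<lambda>x. ?U x powr m) = (\<lambda>x. shock_fun s (?U x) / \<mu>)"
    using DERIV_imp_deriv by blast
  have W'_der: "((\<lambda>x. shock_fun s (?U x) / \<mu>) has_real_derivative
      (deriv f (?U x) - s) * profile_field s (?U x) / \<mu>) (at x)" for x
    using DERIV_cdivide[OF DERIV_chain2[OF shock_fun_has_deriv U_der], where c = \<mu>] by simp
  have "- s * deriv ?U x + deriv (\<lambda>x. f (?U x)) x = \<mu> * deriv (deriv (\<lambda>x. ?U x powr m)) x" for x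
    using DERIV_imp_deriv[OF U_der] DERIV_imp_deriv[OF DERIV_chain2[OF f_has_deriv U_der]]
      DERIV_imp_deriv[OF W'_der] \<mu>_pos
    unfolding W_deriv by (simp add: field_simps)
  moreover have "antimono ?U"
    by (rule antimonoI) (metis canonical_profile_strict_decreasing order.order_iff_strict order.refl)
  moreover have "?U differentiable (at x)" "(\<lambda>x. ?U x powr m) differentiable (at x)"
    "deriv (\<lambda>x. ?U x powr m) differentiable (at x)" for x
    using U_der W_der W'_der unfolding W_deriv real_differentiable_def by blast+
  ultimately show ?thesis
    unfolding dec_profile_def using canonical_profile_tendsto_at_bot canonical_profile_tendsto_at_top
    by blast
qed

lemma dec_profile_unique:
  assumes P: "dec_profile m \<mu> f um 0 s U" and Q: "dec_profile m \<mu> f um 0 s V"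
  shows "\<exists>c. \<forall>\<xi>. V \<xi> = U (\<xi> + c)"
proof -
  have shift: "\<exists>k. \<forall>\<xi>. profile_time (W \<xi>) = \<xi> + k" if W: "dec_profile m \<mu> f um 0 s W" for W
  proof -
    have const: "\<forall>\<xi>. ((\<lambda>\<xi>. profile_time (W \<xi>) - \<xi>) has_real_derivative 0) (at \<xi>)"
    proof
      fix \<xi>
      have W\<xi>: "0 < W \<xi>" "W \<xi> < um"
        using dec_profile_range[OF W] by auto
      have "((\<lambda>\<xi>. profile_time (W \<xi>) - \<xi>) has_real_derivative
          1 / profile_field s (W \<xi>) * profile_field s (W \<xi>) - 1) (at \<xi>)"
        using DERIV_diff[OF DERIV_chain2[OF profile_time_has_deriv[OF W\<xi>] dec_profile_has_field_deriv[OF W]]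
            DERIV_ident] .
      with profile_field_neg[OF W\<xi>]
      show "((\<lambda>\<xi>. profile_time (W \<xi>) - \<xi>) has_real_derivative 0) (at \<xi>)"
        by simp
    qed
    have "profile_time (W \<xi>) = \<xi> + profile_time (W 0)" for \<xi>
      using DERIV_isconst_all[OF const, of \<xi> 0] by simp
    then show ?thesis by blast
  qed
  obtain k1 where k1: "\<And>\<xi>. profile_time (U \<xi>) = \<xi> + k1" using shift[OF P] by blast
  obtain k2 where k2: "\<And>\<xi>. profile_time (V \<xi>) = \<xi> + k2" using shift[OF Q] by blast
  have "V \<xi> = U (\<xi> + (k2 - k1))" for \<xi>
  proof (rule profile_time_inj)
    show "0 < V \<xi>" "V \<xi> < um" "0 < U (\<xi> + (k2 - k1))" "U (\<xi> + (k2 - k1)) < um"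
      using dec_profile_range[OF P] dec_profile_range[OF Q] by auto
    show "profile_time (V \<xi>) = profile_time (U (\<xi> + (k2 - k1)))"
      unfolding k1 k2 by simp
  qed
  then show ?thesis by blast
qed

section \<open>The degenerate case and the full decay statement\<close>

lemma degenerate_higher_deriv_neg:
  assumes "1 \<le> k" and "deriv f 0 = s"
    and vanish: "\<forall>j\<in>{2..k}. (deriv ^^ j) f 0 = 0" and nonzero: "(deriv ^^ (k + 1)) f 0 \<noteq> 0"
  shows "(deriv ^^ (k + 1)) f 0 < 0"
proof (rule ccontr)
  let ?A = "(deriv ^^ (k + 1)) f 0"
  assume "\<not> ?A < 0"
  with nonzero have "0 < ?A" by simp
  obtain \<delta> where "0 < \<delta>" and \<delta>: "\<And>u. 0 < u \<Longrightarrow> u < \<delta> \<Longrightarrow> \<exists>t. \<bar>(deriv ^^ (k + 1)) f t - ?A\<bar> < \<bar>?A\<bar> / 2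
      \<and> shock_fun s u = (deriv ^^ (k + 1)) f t / fact (k + 1) * u ^ (k + 1)"
    using shock_fun_Maclaurin_near_zero[OF rankine_hugoniot assms] by blast
  define u where "u = min \<delta> um / 2"
  have u: "0 < u" "u < \<delta>" "u < um"
    using \<open>0 < \<delta>\<close> um_pos by (auto simp: u_def)
  obtain t where "\<bar>(deriv ^^ (k + 1)) f t - ?A\<bar> < \<bar>?A\<bar> / 2"
    and g: "shock_fun s u = (deriv ^^ (k + 1)) f t / fact (k + 1) * u ^ (k + 1)"
    using \<delta>[OF u(1,2)] by blast
  with \<open>0 < ?A\<close> have "0 < (deriv ^^ (k + 1)) f t"
    using abs_ge_minus_self[of "(deriv ^^ (k + 1)) f t - ?A"] abs_of_pos[of ?A] by linarith
  with g u have "0 < shock_fun s u"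
    by simp
  with shock_fun_neg[OF u(1,3)] show False by simp
qed

lemma shock_fun_equiv_degenerate:
  assumes "1 \<le> k" and "deriv f 0 = s"
    and vanish: "\<forall>j\<in>{2..k}. (deriv ^^ j) f 0 = 0" and nonzero: "(deriv ^^ (k + 1)) f 0 \<noteq> 0"
  shows "asym_equiv (\<lambda>u. - shock_fun s u) (\<lambda>u. u ^ (k + 1)) (at_right 0)"
proof -
  define A where "A = (deriv ^^ (k + 1)) f 0"
  define c :: real where "c = fact (k + 1)"
  have "A < 0" "0 < c"
    using degenerate_higher_deriv_neg[OF assms] by (simp_all add: A_def c_def)
  obtain \<delta> where "0 < \<delta>" and \<delta>: "\<And>u. 0 < u \<Longrightarrow> u < \<delta> \<Longrightarrow> \<exists>t. \<bar>(deriv ^^ (k + 1)) f t - A\<bar> < \<bar>A\<bar> / 2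
      \<and> shock_fun s u = (deriv ^^ (k + 1)) f t / c * u ^ (k + 1)"
    using shock_fun_Maclaurin_near_zero[OF rankine_hugoniot assms] unfolding A_def c_def by blast
  show ?thesis
  proof (rule asym_equivI)
    show "0 < \<bar>A\<bar> / 2 / c" "0 < 3 * \<bar>A\<bar> / 2 / c"
      using \<open>A < 0\<close> \<open>0 < c\<close> by (simp_all add: divide_neg_pos)
    show "eventually (\<lambda>u. 0 \<le> u ^ (k + 1) \<and> \<bar>A\<bar> / 2 / c * u ^ (k + 1) \<le> - shock_fun s u
        \<and> - shock_fun s u \<le> 3 * \<bar>A\<bar> / 2 / c * u ^ (k + 1)) (at_right 0)"
      unfolding eventually_at_right_field
    proof (intro exI conjI allI impI)
      fix u :: real assume "0 < u" "u < \<delta>"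
      then obtain t where t: "\<bar>(deriv ^^ (k + 1)) f t - A\<bar> < \<bar>A\<bar> / 2"
        and g: "- shock_fun s u = - (deriv ^^ (k + 1)) f t / c * u ^ (k + 1)"
        using \<delta> by fastforce
      have "\<bar>A\<bar> / 2 \<le> - (deriv ^^ (k + 1)) f t" "- (deriv ^^ (k + 1)) f t \<le> 3 * \<bar>A\<bar> / 2"
        using t \<open>A < 0\<close> by (auto simp: abs_less_iff)
      then have "\<bar>A\<bar> / 2 / c * u ^ (k + 1) \<le> - (deriv ^^ (k + 1)) f t / c * u ^ (k + 1)"
        "- (deriv ^^ (k + 1)) f t / c * u ^ (k + 1) \<le> 3 * \<bar>A\<bar> / 2 / c * u ^ (k + 1)"
        using \<open>0 < u\<close> \<open>0 < c\<close> by (intro mult_right_mono divide_right_mono; simp)+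
      then show "0 \<le> u ^ (k + 1)" "\<bar>A\<bar> / 2 / c * u ^ (k + 1) \<le> - shock_fun s u"
        "- shock_fun s u \<le> 3 * \<bar>A\<bar> / 2 / c * u ^ (k + 1)"
        unfolding g using \<open>0 < u\<close> by simp_all
    qed (use \<open>0 < \<delta>\<close> in simp)
  qed
qed

lemma dec_profile_asymptotics:
  assumes P: "dec_profile m \<mu> f um 0 s U"
  shows "(deriv f 0 < s \<and> s < deriv f um \<longrightarrow>
         0 < decay_rate s \<and>
         asym_equiv (\<lambda>\<xi>. \<bar>deriv U \<xi>\<bar> powr (1 / (2 - m))) (\<lambda>\<xi>. \<bar>U \<xi>\<bar>) at_top \<and>
         asym_equiv (\<lambda>\<xi>. \<bar>U \<xi>\<bar>) (\<lambda>\<xi>. \<bar>\<xi>\<bar> powr (- 1 / (1 - m))) at_top \<and>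
         asym_equiv (\<lambda>\<xi>. \<bar>deriv U \<xi>\<bar>) (\<lambda>\<xi>. \<bar>U \<xi> - um\<bar>) at_bot \<and>
         asym_equiv (\<lambda>\<xi>. \<bar>U \<xi> - um\<bar>) (\<lambda>\<xi>. exp (- decay_rate s * \<bar>\<xi>\<bar>)) at_bot) \<and>
      (\<forall>k::nat. deriv f 0 = s \<and> s < deriv f um \<and> k \<ge> 1 \<and>
         (\<forall>j\<in>{2..k}. (deriv ^^ j) f 0 = 0) \<and> (deriv ^^ (k + 1)) f 0 \<noteq> 0 \<longrightarrow>
         0 < decay_rate s \<and>
         asym_equiv (\<lambda>\<xi>. \<bar>deriv U \<xi>\<bar> powr (1 / (real k + 2 - m))) (\<lambda>\<xi>. \<bar>U \<xi>\<bar>) at_top \<and>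
         asym_equiv (\<lambda>\<xi>. \<bar>U \<xi>\<bar>) (\<lambda>\<xi>. \<bar>\<xi>\<bar> powr (- 1 / (real k + 1 - m))) at_top \<and>
         asym_equiv (\<lambda>\<xi>. \<bar>deriv U \<xi>\<bar>) (\<lambda>\<xi>. \<bar>U \<xi> - um\<bar>) at_bot \<and>
         asym_equiv (\<lambda>\<xi>. \<bar>U \<xi> - um\<bar>) (\<lambda>\<xi>. exp (- decay_rate s * \<bar>\<xi>\<bar>)) at_bot)"
    (is "(?nondegenerate \<longrightarrow> ?decay1) \<and> (\<forall>k. ?degenerate k \<longrightarrow> ?decay k)")
proof (rule conjI[OF impI allI[OF impI]])
  assume ?nondegenerate
  then have "deriv f 0 < s" "s < deriv f um"
    by simp_all
  have "asym_equiv (\<lambda>u. - shock_fun s u) (\<lambda>u. u ^ 1) (at_right 0)"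
    using shock_fun_equiv_nondegenerate[OF rankine_hugoniot \<open>deriv f 0 < s\<close>] by simp
  from dec_profile_decay[OF P \<open>s < deriv f um\<close> order_refl this]
  show ?decay1 by simp
next
  fix k :: nat
  assume "?degenerate k"
  then have "deriv f 0 = s" "s < deriv f um" "1 \<le> k"
    "\<forall>j\<in>{2..k}. (deriv ^^ j) f 0 = 0" "(deriv ^^ (k + 1)) f 0 \<noteq> 0"
    by simp_all
  from shock_fun_equiv_degenerate[OF \<open>1 \<le> k\<close> this(1,4,5)]
  have equiv: "asym_equiv (\<lambda>u. - shock_fun s u) (\<lambda>u. u ^ (k + 1)) (at_right 0)" .
  have exponents: "real (k + 1) + 1 - m = real k + 2 - m" "real (k + 1) - m = real k + 1 - m"
    by simp_all
  from dec_profile_decay[OF P \<open>s < deriv f um\<close> _ equiv, unfolded exponents]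
  show "?decay k" by simp
qed

end

theorem theorem2p1:
  fixes m \<mu> um up :: real and f :: "real \<Rightarrow> real"
  assumes m0: "0 < m" and m1: "m < 1" and mu: "0 < \<mu>"
    and f_smooth: "smooth_fun f"
    and up0: "up = 0" and umup: "um > up"
  defines "g \<equiv> (\<lambda>s u. - s * (u - um) + f u - f um)"
  shows
    "(\<forall>s U. dec_profile m \<mu> f um up s U \<longrightarrow>
        s = (f up - f um) / (up - um) \<and> (\<forall>u\<in>{up<..<um}. g s u < 0))
   \<and>
    (\<forall>s. s = (f up - f um) / (up - um) \<and> (\<forall>u\<in>{up<..<um}. g s u < 0) \<longrightarrow>
        (\<exists>U. dec_profile m \<mu> f um up s U) \<and>
        (\<forall>U V. dec_profile m \<mu> f um up s U \<and> dec_profile m \<mu> f um up s V \<longrightarrow>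
           (\<exists>c. \<forall>\<xi>. V \<xi> = U (\<xi> + c))))
   \<and>
    (\<forall>s U. s = (f up - f um) / (up - um) \<and> (\<forall>u\<in>{up<..<um}. g s u < 0) \<and>
           dec_profile m \<mu> f um up s U \<longrightarrow>
       (let lam = um powr (1 - m) / (\<mu> * m) * (deriv f um - s) in
         (deriv f up < s \<and> s < deriv f um \<longrightarrow>
            lam > 0 \<and>
            asym_equiv (\<lambda>\<xi>. \<bar>deriv U \<xi>\<bar> powr (1 / (2 - m))) (\<lambda>\<xi>. \<bar>U \<xi> - up\<bar>) at_top \<and>
            asym_equiv (\<lambda>\<xi>. \<bar>U \<xi> - up\<bar>) (\<lambda>\<xi>. \<bar>\<xi>\<bar> powr (- 1 / (1 - m))) at_top \<and>
            asym_equiv (\<lambda>\<xi>. \<bar>deriv U \<xi>\<bar>) (\<lambda>\<xi>. \<bar>U \<xi> - um\<bar>) at_bot \<and>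
            asym_equiv (\<lambda>\<xi>. \<bar>U \<xi> - um\<bar>) (\<lambda>\<xi>. exp (- lam * \<bar>\<xi>\<bar>)) at_bot) \<and>
         (\<forall>k::nat. deriv f up = s \<and> s < deriv f um \<and> k \<ge> 1 \<and>
            (\<forall>j\<in>{2..k}. (deriv ^^ j) f up = 0) \<and> (deriv ^^ (k + 1)) f up \<noteq> 0 \<longrightarrow>
            lam > 0 \<and>
            asym_equiv (\<lambda>\<xi>. \<bar>deriv U \<xi>\<bar> powr (1 / (real k + 2 - m))) (\<lambda>\<xi>. \<bar>U \<xi> - up\<bar>) at_top \<and>
            asym_equiv (\<lambda>\<xi>. \<bar>U \<xi> - up\<bar>) (\<lambda>\<xi>. \<bar>\<xi>\<bar> powr (- 1 / (real k + 1 - m))) at_top \<and>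
            asym_equiv (\<lambda>\<xi>. \<bar>deriv U \<xi>\<bar>) (\<lambda>\<xi>. \<bar>U \<xi> - um\<bar>) at_bot \<and>
            asym_equiv (\<lambda>\<xi>. \<bar>U \<xi> - um\<bar>) (\<lambda>\<xi>. exp (- lam * \<bar>\<xi>\<bar>)) at_bot)))"
proof -
  have "0 < um"
    using umup up0 by simp
  interpret porous_shock m \<mu> um f
    using m0 m1 mu f_smooth \<open>0 < um\<close> by unfold_locales
  have g_eq: "g = shock_fun"
    unfolding g_def shock_fun_def[abs_def] by simp
  have admissible: "admissible_shock m \<mu> um f s"
    if "s = (f 0 - f um) / (0 - um)" "\<forall>u\<in>{0<..<um}. shock_fun s u < 0" for s
    using that porous_shock_axioms unfolding admissible_shock_def admissible_shock_axioms_def by auto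
  have necessary: "s = (f 0 - f um) / (0 - um) \<and> (\<forall>u\<in>{0<..<um}. shock_fun s u < 0)"
    if "dec_profile m \<mu> f um 0 s U" for s U
    using dec_profile_first_integral(1)[OF that] dec_profile_shock_fun_neg[OF that] by auto
  show ?thesis
    unfolding up0 g_eq Let_def decay_rate_def[symmetric] diff_zero
    using necessary admissible_shock.dec_profile_canonical_profile[OF admissible]
      admissible_shock.dec_profile_unique[OF admissible] admissible_shock.dec_profile_asymptotics[OF admissible]
    by blast
qed

end
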